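(* Let $m\ge n$, $B\in\mathbb R^{n\times m}$ of full row rank, $f,h$ convex and continuously differentiable with Lipschitz gradients, $\mathcal L(u,p)=f(u)-h(p)+(Bu,p)$ with saddle point $(u^*,p^* )$, and $\mathcal I_{\mathcal V},\mathcal I_{\mathcal Q}$ symmetric positive definite. Suppose $f\in\mathcal S^{1,1}_{\mu_{f,\mathcal I_{\mathcal V}},L_{f,\mathcal I_{\mathcal V}}}$ w.r.t. $\mathcal I_{\mathcal V}$ with $0<\mu_{f,\mathcal I_{\mathcal V}}\le L_{f,\mathcal I_{\mathcal V}}<2$. Let $(u_k,p_k)$ be generated from $(u_0,p_0)$ by the inexact IMEX iteration $$u_{k+1/2}=u_k-\mathcal I_{\mathcal V}^{-1}(\nabla f(u_k)+B^\top p_k),\qquad p_{k+1}=p_k-\alpha_k\mathcal I_{\mathcal Q}^{-1}(\nabla h(p_k)-Bu_{k+1/2}),$$ where $u_{k+1}$ is any point satisfying $\|\nabla\tilde f(u_{k+1};u_k,p_{k+1})\|^2_{\mathcal I_{\mathcal V}^{-1}}\le\epsilon_k$ for $k=0,1,2,\dots$, with $\tilde f(u;u_k,p_{k+1})=f(u)+\frac1{2\alpha_k}\|u-u_k+\alpha_k\mathcal I_{\mathcal V}^{-1}B^\top p_{k+1}\|^2_{\mathcal I_{\mathcal V}}$ (gradient in $u$). Then for $0<\alpha_k<\mu_{\mathcal Q}/L_{S,\mathcal Q}^2$ and $\mu_k=\min\{\mu_{\mathcal V}/2,\ \mu_{\mathcal Q}-\alpha_kL_{S,\mathcal Q}^2\}$,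 $$\mathcal E(u_{k+1},p_{k+1})\le\frac1{1+\alpha_k\mu_k}\mathcal E(u_k,p_k)+\frac{2\alpha_k}{(1+\alpha_k\mu_k)\mu_{\mathcal V}}\epsilon_k.$$ In particular, for $\alpha_k=\mu_{\mathcal Q}/(2L_{S,\mathcal Q}^2)$ for all $k$, $$\mathcal E(u_{n+1},p_{n+1})\le\rho^{n+1}\mathcal E(u_0,p_0)+\frac{\mu_{\mathcal Q}}{\mu_{\mathcal V}L_{S,\mathcal Q}^2}\sum_{k=0}^n\rho^{n-k+1}\epsilon_k,$$ where $\mu=\min\{\mu_{\mathcal V},\mu_{\mathcal Q}\}$ and $\rho=1/(1+\mu_{\mathcal Q}\mu/(4L_{S,\mathcal Q}^2))\in(0,1)$.
   Context: For SPD $M$, $\|x\|_M=(Mx,x)^{1/2}$; $D_g(y,x)=g(y)-g(x)-(\nabla g(x),y-x)$; $g\in\mathcal S^{1,1}_{\mu_{g,M},L_{g,M}}$ w.r.t. $M$ means $\frac{\mu_{g,M}}2\|x-y\|_M^2\le D_g(y,x)\le\frac{L_{g,M}}2\|x-y\|_M^2$ for all $x,y$. A saddle point satisfies $\nabla f(u^* )+B^\top p^*=0$, $Bu^*=\nabla h(p^* )$. Define $e(u)=u-\mathcal I_{\mathcal V}^{-1}\nabla f(u)$, $h_B(p)=h(p)+\frac12(B\mathcal I_{\mathcal V}^{-1}B^\top p,p)$, $\mathcal E(u,p)=\frac12\|u-u^*\|^2_{\mathcal I_{\mathcal V}}+\frac12\|p-p^*\|^2_{\mathcal I_{\mathcal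 Q}}$. Let $L_{e,\mathcal I_{\mathcal V}}$ be the Lipschitz constant of $e$ in $\|\cdot\|_{\mathcal I_{\mathcal V}}$, $\mu_{h_B,\mathcal I_{\mathcal Q}},L_{h_B,\mathcal I_{\mathcal Q}}$ the convexity and smoothness constants of $h_B$ w.r.t. $\mathcal I_{\mathcal Q}$, $L_S^2=\lambda_{\max}(\mathcal I_{\mathcal Q}^{-1}B\mathcal I_{\mathcal V}^{-1}B^\top)$. Constants: $\mu_{\mathcal V}=\mu_{f,\mathcal I_{\mathcal V}}$, $\mu_{\mathcal Q}=(2-L_{f,\mathcal I_{\mathcal V}})\mu_{h_B,\mathcal I_{\mathcal Q}}$, $L_{S,\mathcal Q}^2=L_{h_B,\mathcal I_{\mathcal Q}}^2+L_{e,\mathcal I_{\mathcal V}}^2L_S^2$. *)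

theory Defs
  imports "HOL-Analysis.Analysis"
begin

definition normsq :: "real^'a^'a \<Rightarrow> real^'a \<Rightarrow> real" where
  "normsq M x = (M *v x) \<bullet> x"

definition SPD :: "real^'a^'a \<Rightarrow> bool" where
  "SPD M \<longleftrightarrow> transpose M = M \<and> (\<forall>x. x \<noteq> 0 \<longrightarrow> 0 < (M *v x) \<bullet> x)"

definition bregman :: "(real^'a \<Rightarrow> real) \<Rightarrow> (real^'a \<Rightarrow> real^'a) \<Rightarrow> real^'a \<Rightarrow> real^'a \<Rightarrow> real" where
  "bregman g G y x = g y - g x - G x \<bullet> (y - x)"

definition in_S11 :: "(real^'a \<Rightarrow> real) \<Rightarrow> (real^'a \<Rightarrow> real^'a) \<Rightarrow> real^'a^'a \<Rightarrow> real \<Rightarrow> real \<Rightarrow> bool" where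
  "in_S11 g G M \<mu> L \<longleftrightarrow> (\<forall>x y. \<mu>/2 * normsq M (x - y) \<le> bregman g G y x
                                \<and> bregman g G y x \<le> L/2 * normsq M (x - y))"

definition cvx_const :: "(real^'a \<Rightarrow> real) \<Rightarrow> (real^'a \<Rightarrow> real^'a) \<Rightarrow> real^'a^'a \<Rightarrow> real" where
  "cvx_const g G M = Sup {\<mu>. \<forall>x y. \<mu>/2 * normsq M (x - y) \<le> bregman g G y x}"

definition smooth_const :: "(real^'a \<Rightarrow> real) \<Rightarrow> (real^'a \<Rightarrow> real^'a) \<Rightarrow> real^'a^'a \<Rightarrow> real" where
  "smooth_const g G M = Inf {L. \<forall>x y. bregman g G y x \<le> L/2 * normsq M (x - y)}"

definition lip_const :: "(real^'a \<Rightarrow> real^'a) \<Rightarrow> real^'a^'a \<Rightarrow> real" where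
  "lip_const F M = Inf {L. 0 \<le> L \<and> (\<forall>x y. sqrt (normsq M (F x - F y)) \<le> L * sqrt (normsq M (x - y)))}"

definition lambda_max :: "real^'a^'a \<Rightarrow> real" where
  "lambda_max A = Max {c. \<exists>v. v \<noteq> 0 \<and> A *v v = c *\<^sub>R v}"

definition hB :: "(real^'n \<Rightarrow> real) \<Rightarrow> real^'m^'n \<Rightarrow> real^'m^'m \<Rightarrow> real^'n \<Rightarrow> real" where
  "hB h B IV q = h q + 1/2 * (((B ** matrix_inv IV ** transpose B) *v q) \<bullet> q)"

definition ghB :: "(real^'n \<Rightarrow> real^'n) \<Rightarrow> real^'m^'n \<Rightarrow> real^'m^'m \<Rightarrow> real^'n \<Rightarrow> real^'n" where
  "ghB gh B IV q = gh q + (B ** matrix_inv IV ** transpose B) *v q"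

definition eop :: "(real^'m \<Rightarrow> real^'m) \<Rightarrow> real^'m^'m \<Rightarrow> real^'m \<Rightarrow> real^'m" where
  "eop gf IV v = v - matrix_inv IV *v gf v"

end

theory Submission
  imports Defs
begin

text \<open>
  Write d_u = u_{k+1} - u^*, d_p = p_{k+1} - p^* and E_k = E(u_k, p_k). By the identity
  1/2 |a - s|^2 - 1/2 |b - s|^2 = (a - b, a - s) - 1/2 |a - b|^2, the update equations and the
  saddle point equations turn E_{k+1} - E_k into \<alpha>_k times inner products against d_u and d_p,
  minus 1/2 |u_{k+1} - u_k|^2 + 1/2 |p_{k+1} - p_k|^2. The terms evaluated at the new iterate
  are dissipative: strong convexity and cocoercivity of \<nabla>f, together with strong convexity of
  h_B (which is where the full rank of B enters), bound them by
  -\<mu>_V/4 |d_u|^2 - \<mu>_Q/2 |d_p|^2, and Young's inequality moves the residual of the inexact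
  u-solve into \<epsilon>_k/\<mu>_V. The explicit treatment of \<nabla>h_B and of e(u) leaves cross terms of
  size L_{h_B} |p_{k+1} - p_k| |d_p| + L_e L_S |u_{k+1} - u_k| |d_p|; they are absorbed by
  the squared step lengths at the price \<alpha>_k^2 L_{S,Q}^2 |d_p|^2, whence the step size
  restriction. Iterating the resulting contraction for a constant step gives the geometric bound.
\<close>

section \<open>Norms induced by symmetric positive definite matrices\<close>

lemma inner_matrix_vector_transpose:
  fixes A :: "real^'m^'n"
  shows "(A *v x) \<bullet> y = x \<bullet> (transpose A *v y)"
  by (simp add: dot_lmul_matrix[symmetric] inner_commute)

lemma symmetric_matrix_inner_commute:
  fixes M :: "real^'n^'n"
  assumes "transpose M = M"
  shows "(M *v x) \<bullet> y = x \<bullet> (M *v y)"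
  using inner_matrix_vector_transpose[of M x y] assms by simp

lemma SPD_symmetric: "SPD M \<Longrightarrow> transpose M = M"
  by (simp add: SPD_def)

lemma SPD_matrix_inv:
  fixes M :: "real^'n^'n"
  assumes "SPD M"
  shows "M ** matrix_inv M = mat 1" and "matrix_inv M ** M = mat 1"
proof -
  have "inj ((*v) M)"
  proof (rule injI)
    fix x y
    assume "M *v x = M *v y"
    then have "(M *v (x - y)) \<bullet> (x - y) = 0"
      by (simp add: matrix_vector_mult_diff_distrib)
    then show "x = y"
      using assms unfolding SPD_def by (metis less_irrefl right_minus_eq)
  qed
  then have "invertible M"
    using matrix_left_invertible_injective invertible_left_inverse by blast
  then have "\<exists>A. M ** A = mat 1 \<and> A ** M = mat 1"
    by (simp add: invertible_def)
  then have "M ** matrix_inv M = mat 1 \<and> matrix_inv M ** M = mat 1"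
    unfolding matrix_inv_def by (rule someI_ex)
  then show "M ** matrix_inv M = mat 1" "matrix_inv M ** M = mat 1"
    by auto
qed

lemma SPD_matrix_inv_cancel:
  fixes M :: "real^'n^'n"
  assumes "SPD M"
  shows "M *v (matrix_inv M *v x) = x" and "matrix_inv M *v (M *v x) = x"
  using SPD_matrix_inv[OF assms] by (simp_all add: matrix_vector_mul_assoc)

lemma SPD_matrix_inv_SPD:
  fixes M :: "real^'n^'n"
  assumes "SPD M"
  shows "SPD (matrix_inv M)"
proof -
  let ?I = "matrix_inv M"
  have "transpose ?I ** M = mat 1"
    using SPD_matrix_inv(1)[OF assms] SPD_symmetric[OF assms]
    by (metis matrix_transpose_mul transpose_mat)
  then have "transpose ?I = ?I"
    by (metis matrix_mul_assoc matrix_mul_lid matrix_mul_rid SPD_matrix_inv(1)[OF assms])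
  moreover have "0 < (?I *v x) \<bullet> x" if "x \<noteq> 0" for x
  proof -
    have "?I *v x \<noteq> 0"
      using that SPD_matrix_inv_cancel(1)[OF assms, of x] by auto
    then have "0 < (M *v (?I *v x)) \<bullet> (?I *v x)"
      using assms by (simp add: SPD_def)
    then show ?thesis
      using SPD_matrix_inv_cancel(1)[OF assms, of x] by (simp add: inner_commute)
  qed
  ultimately show ?thesis
    by (simp add: SPD_def)
qed

lemma normsq_pos: "SPD M \<Longrightarrow> x \<noteq> 0 \<Longrightarrow> 0 < normsq M x"
  by (simp add: SPD_def normsq_def)

lemma normsq_nonneg: "SPD M \<Longrightarrow> 0 \<le> normsq M x"
  using normsq_pos[of M x] by (cases "x = 0") (auto simp: normsq_def)

lemma normsq_scaleR: "normsq M (c *\<^sub>R x) = c\<^sup>2 * normsq M x"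
  by (simp add: normsq_def matrix_vector_mult_scaleR power2_eq_square)

lemma normsq_minus_commute: "normsq M (x - y) = normsq M (y - x)"
  by (simp add: normsq_def matrix_vector_mult_diff_distrib inner_diff_left inner_diff_right)

lemma normsq_diff:
  assumes "SPD M"
  shows "normsq M (a - b) = normsq M a - 2 * ((M *v a) \<bullet> b) + normsq M b"
  using symmetric_matrix_inner_commute[OF SPD_symmetric[OF assms], of b a]
  by (simp add: normsq_def matrix_vector_mult_diff_distrib inner_diff_left inner_diff_right
      inner_commute)

lemma inner_le_normsq_young:
  assumes "SPD M" and "0 < t"
  shows "2 * ((M *v x) \<bullet> y) \<le> t * normsq M x + normsq M y / t"
proof -
  have "0 \<le> normsq M (t *\<^sub>R x - y)"
    by (rule normsq_nonneg[OF assms(1)])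
  also have "\<dots> = t\<^sup>2 * normsq M x - 2 * t * ((M *v x) \<bullet> y) + normsq M y"
    by (simp add: normsq_diff[OF assms(1)] normsq_scaleR matrix_vector_mult_scaleR)
  finally have "2 * t * ((M *v x) \<bullet> y) \<le> t * (t * normsq M x + normsq M y / t)"
    using assms(2) by (simp add: power2_eq_square algebra_simps)
  then show ?thesis
    using assms(2) by (simp add: mult.assoc)
qed

lemma normsq_diff_le:
  assumes "SPD M"
  shows "normsq M (a - b) \<le> 2 * normsq M a + 2 * normsq M b"
  using normsq_diff[OF assms, of a b] inner_le_normsq_young[OF assms, of 1 a "- b"]
    normsq_scaleR[of M "- 1" b]
  by simp

lemma inner_le_sqrt_normsq:
  assumes "SPD M"
  shows "(M *v x) \<bullet> y \<le> sqrt (normsq M x) * sqrt (normsq M y)"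
proof (cases "x = 0 \<or> y = 0")
  case True
  then show ?thesis
    by (auto simp: normsq_def)
next
  case False
  define a b where "a = sqrt (normsq M x)" and "b = sqrt (normsq M y)"
  have "0 < normsq M x" "0 < normsq M y"
    using False normsq_pos[OF assms] by auto
  then have "0 < a" "0 < b" "normsq M x = a * a" "normsq M y = b * b"
    by (simp_all add: a_def b_def)
  then have "2 * ((M *v x) \<bullet> y) \<le> (b / a) * normsq M x + normsq M y / (b / a)"
    by (intro inner_le_normsq_young[OF assms]) auto
  also have "\<dots> = 2 * (a * b)"
    using \<open>0 < a\<close> \<open>0 < b\<close> \<open>normsq M x = a * a\<close> \<open>normsq M y = b * b\<close>
    by (simp add: field_simps)
  finally show ?thesis
    by (simp add: a_def b_def)
qed

lemma normsq_matrix_inv_apply: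
  assumes "SPD M"
  shows "normsq M (matrix_inv M *v g) = normsq (matrix_inv M) g"
  using SPD_matrix_inv_cancel(1)[OF assms, of g] by (simp add: normsq_def inner_commute)

lemma inner_le_sqrt_normsq_dual:
  assumes "SPD M"
  shows "g \<bullet> y \<le> sqrt (normsq (matrix_inv M) g) * sqrt (normsq M y)"
  using inner_le_sqrt_normsq[OF assms, of "matrix_inv M *v g" y]
  by (simp add: SPD_matrix_inv_cancel(1)[OF assms] normsq_matrix_inv_apply[OF assms])

lemma inner_le_normsq_young_dual:
  assumes "SPD M" and "0 < t"
  shows "2 * (g \<bullet> y) \<le> t * normsq (matrix_inv M) g + normsq M y / t"
  using inner_le_normsq_young[OF assms, of "matrix_inv M *v g" y]
  by (simp add: SPD_matrix_inv_cancel(1)[OF assms(1)] normsq_matrix_inv_apply[OF assms(1)])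

lemma half_normsq_diff_eq:
  assumes "SPD V"
  shows "1/2 * normsq V (a - s) - 1/2 * normsq V (b - s)
       = (V *v (a - b)) \<bullet> (a - s) - 1/2 * normsq V (a - b)"
proof -
  have "normsq V (b - s) = normsq V ((a - s) - (a - b))"
    by simp
  also have "\<dots> = normsq V (a - s) - 2 * ((V *v (a - b)) \<bullet> (a - s)) + normsq V (a - b)"
    using normsq_diff[OF assms, of "a - s" "a - b"]
      symmetric_matrix_inner_commute[OF SPD_symmetric[OF assms], of "a - s" "a - b"]
    by (simp add: inner_commute)
  finally show ?thesis
    by linarith
qed

section \<open>Bregman divergences\<close>

lemma has_real_derivative_along_line:
  fixes g :: "real^'n \<Rightarrow> real"
  assumes "\<And>z. (g has_derivative (\<lambda>h. G z \<bullet> h)) (at z)"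
  shows "((\<lambda>t. g (x + t *\<^sub>R d)) has_real_derivative (G (x + t *\<^sub>R d) \<bullet> d)) (at t within S)"
proof -
  have "((\<lambda>t. x + t *\<^sub>R d) has_derivative (\<lambda>s. s *\<^sub>R d)) (at t within S)"
    by (auto intro!: derivative_eq_intros)
  from has_derivative_compose[OF this assms]
  have "((\<lambda>t. g (x + t *\<^sub>R d)) has_derivative (\<lambda>s. G (x + t *\<^sub>R d) \<bullet> (s *\<^sub>R d))) (at t within S)" .
  moreover have "(\<lambda>s. G (x + t *\<^sub>R d) \<bullet> (s *\<^sub>R d)) = (*) (G (x + t *\<^sub>R d) \<bullet> d)"
    by (auto simp: fun_eq_iff)
  ultimately show ?thesis
    by (simp add: has_field_derivative_def)
qed

lemma convex_bregman_nonneg: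
  fixes g :: "real^'n \<Rightarrow> real"
  assumes cvx: "convex_on UNIV g"
    and deriv: "\<And>z. (g has_derivative (\<lambda>h. G z \<bullet> h)) (at z)"
  shows "0 \<le> bregman g G y x"
proof -
  let ?\<phi> = "\<lambda>t::real. g (x + t *\<^sub>R (y - x))"
  have "convex_on UNIV ?\<phi>"
  proof (rule convex_onI)
    fix t a b :: real
    have "x + ((1 - t) *\<^sub>R a + t *\<^sub>R b) *\<^sub>R (y - x)
        = (1 - t) *\<^sub>R (x + a *\<^sub>R (y - x)) + t *\<^sub>R (x + b *\<^sub>R (y - x))"
      by (simp add: algebra_simps)
    moreover assume "0 < t" "t < 1"
    ultimately show "?\<phi> ((1 - t) *\<^sub>R a + t *\<^sub>R b) \<le> (1 - t) * ?\<phi> a + t * ?\<phi> b"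
      using convex_onD[OF cvx, of t "x + a *\<^sub>R (y - x)" "x + b *\<^sub>R (y - x)"] by simp
  qed simp
  then have "?\<phi> 1 - ?\<phi> 0 \<ge> (G x \<bullet> (y - x)) * (1 - 0)"
    using convex_on_imp_above_tangent has_real_derivative_along_line[OF deriv, of x "y - x" 0 UNIV]
    by fastforce
  then show ?thesis
    by (simp add: bregman_def)
qed

lemma bregman_le_lipschitz_gradient:
  fixes g :: "real^'n \<Rightarrow> real"
  assumes deriv: "\<And>z. (g has_derivative (\<lambda>h. G z \<bullet> h)) (at z)"
    and lip: "\<forall>a b. norm (G a - G b) \<le> L * norm (a - b)"
  shows "bregman g G y x \<le> \<bar>L\<bar> * (norm (y - x))\<^sup>2"
proof -
  let ?d = "y - x"
  have "((\<lambda>t. g (x + t *\<^sub>R ?d)) has_derivative (\<lambda>s. s * (G (x + t *\<^sub>R ?d) \<bullet> ?d)))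
      (at t within {0..1})" for t
    using has_real_derivative_along_line[OF deriv, unfolded has_field_derivative_def]
    by (simp add: mult.commute[of _ "G _ \<bullet> _"])
  then have "\<exists>t\<in>{0<..<1}. g (x + 1 *\<^sub>R ?d) - g (x + 0 *\<^sub>R ?d)
      = (\<lambda>s. s * (G (x + t *\<^sub>R ?d) \<bullet> ?d)) (1 - 0)"
    by (intro mvt_simple) auto
  then obtain t where t: "0 < t" "t < 1" and mvt: "g y - g x = G (x + t *\<^sub>R ?d) \<bullet> ?d"
    by auto
  have "bregman g G y x = (G (x + t *\<^sub>R ?d) - G x) \<bullet> ?d"
    using mvt by (simp add: bregman_def inner_diff_left)
  also have "\<dots> \<le> norm (G (x + t *\<^sub>R ?d) - G x) * norm ?d"
    by (rule norm_cauchy_schwarz)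
  also have "\<dots> \<le> (\<bar>L\<bar> * norm ?d) * norm ?d"
  proof (rule mult_right_mono)
    have "norm (G (x + t *\<^sub>R ?d) - G x) \<le> L * (t * norm ?d)"
      using lip t by (metis add_diff_cancel_left' norm_scaleR abs_of_pos)
    also have "\<dots> \<le> \<bar>L\<bar> * norm ?d"
      using t by (intro mult_mono) (auto simp: mult_left_le_one_le)
    finally show "norm (G (x + t *\<^sub>R ?d) - G x) \<le> \<bar>L\<bar> * norm ?d" .
  qed simp
  finally show ?thesis
    by (simp add: power2_eq_square mult.assoc)
qed

lemma bregman_add_swap: "bregman g G y x + bregman g G x y = (G y - G x) \<bullet> (y - x)"
  by (simp add: bregman_def inner_diff_left inner_diff_right inner_commute)

text \<open>Minimising the quadratic upper bound at y - (1/L) Q^{-1} (G y - G x) against the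
  linear lower bound at x.\<close>
lemma bregman_ge_normsq_gradient_diff:
  assumes Q: "SPD Q" and L: "0 < L"
    and nonneg: "\<And>x y. 0 \<le> bregman g G y x"
    and upper: "\<And>x y. bregman g G y x \<le> L / 2 * normsq Q (x - y)"
  shows "normsq (matrix_inv Q) (G y - G x) / (2 * L) \<le> bregman g G y x"
proof -
  define s where "s = matrix_inv Q *v (G y - G x)"
  define N where "N = normsq (matrix_inv Q) (G y - G x)"
  define z where "z = y - (1 / L) *\<^sub>R s"
  have "(G y - G x) \<bullet> s = N"
    by (simp add: s_def N_def normsq_def inner_commute)
  moreover have "normsq Q (y - z) = N / L\<^sup>2"
    using normsq_matrix_inv_apply[OF Q]
    by (simp add: z_def s_def N_def normsq_scaleR power_divide)
  moreover have "g x + G x \<bullet> (z - x) \<le> g z"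
    using nonneg[where x = x and y = z] by (simp add: bregman_def)
  moreover have "g z \<le> g y + G y \<bullet> (z - y) + L / 2 * normsq Q (y - z)"
    using upper[where x = y and y = z] by (simp add: bregman_def)
  ultimately have "(1 / L) * N - L / 2 * (N / L\<^sup>2) \<le> bregman g G y x"
    by (simp add: bregman_def z_def algebra_simps)
  moreover have "(1 / L) * N - L / 2 * (N / L\<^sup>2) = N / (2 * L)"
    using L by (simp add: power2_eq_square field_simps)
  ultimately show ?thesis
    by (simp add: N_def)
qed

lemma gradient_cocoercive:
  assumes Q: "SPD Q" and L: "0 < L"
    and nonneg: "\<And>x y. 0 \<le> bregman g G y x"
    and upper: "\<And>x y. bregman g G y x \<le> L / 2 * normsq Q (x - y)"
  shows "normsq (matrix_inv Q) (G y - G x) / L \<le> (G y - G x) \<bullet> (y - x)"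
  using bregman_ge_normsq_gradient_diff[OF assms, of x y] bregman_ge_normsq_gradient_diff[OF assms, of y x]
    bregman_add_swap[of g G y x] normsq_minus_commute[of "matrix_inv Q" "G x" "G y"]
  by (simp add: field_simps)

lemma gradient_lipschitz_normsq:
  assumes Q: "SPD Q" and L: "0 < L"
    and nonneg: "\<And>x y. 0 \<le> bregman g G y x"
    and upper: "\<And>x y. bregman g G y x \<le> L / 2 * normsq Q (x - y)"
  shows "normsq (matrix_inv Q) (G y - G x) \<le> L\<^sup>2 * normsq Q (y - x)"
proof -
  define N where "N = normsq (matrix_inv Q) (G y - G x)"
  define P where "P = normsq Q (y - x)"
  have N: "0 \<le> N" and P: "0 \<le> P"
    using normsq_nonneg[OF SPD_matrix_inv_SPD[OF Q]] normsq_nonneg[OF Q] by (simp_all add: N_def P_def)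
  have "N / L \<le> sqrt N * sqrt P"
    using gradient_cocoercive[OF assms, of y x] inner_le_sqrt_normsq_dual[OF Q, of "G y - G x" "y - x"]
    by (simp add: N_def P_def)
  then have "(N / L)\<^sup>2 \<le> (sqrt N * sqrt P)\<^sup>2"
    using L N by (intro power_mono) auto
  then have "N * N \<le> N * (L\<^sup>2 * P)"
    using L N P by (simp add: power_divide power_mult_distrib field_simps power2_eq_square)
  moreover have "0 < N \<or> N = 0"
    using N by auto
  ultimately have "N \<le> L\<^sup>2 * P"
    using P by (auto intro: mult_left_le_imp_le)
  then show ?thesis
    by (simp add: N_def P_def)
qed

lemma gradient_inner_le:
  assumes Q: "SPD Q" and L: "0 < L"
    and nonneg: "\<And>x y. 0 \<le> bregman g G y x"
    and upper: "\<And>x y. bregman g G y x \<le> L / 2 * normsq Q (x - y)"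
  shows "(G x - G y) \<bullet> z \<le> L * sqrt (normsq Q (x - y)) * sqrt (normsq Q z)"
proof -
  have "sqrt (normsq (matrix_inv Q) (G x - G y)) \<le> sqrt (L\<^sup>2 * normsq Q (x - y))"
    using gradient_lipschitz_normsq[OF assms, where x = y and y = x] by (rule real_sqrt_le_mono)
  then have "sqrt (normsq (matrix_inv Q) (G x - G y)) \<le> L * sqrt (normsq Q (x - y))"
    using L by (simp add: real_sqrt_mult)
  then have "sqrt (normsq (matrix_inv Q) (G x - G y)) * sqrt (normsq Q z)
      \<le> L * sqrt (normsq Q (x - y)) * sqrt (normsq Q z)"
    by (rule mult_right_mono) (simp add: normsq_nonneg[OF Q])
  with inner_le_sqrt_normsq_dual[OF Q, of "G x - G y" z] show ?thesis
    by linarith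
qed

lemma bregman_bounds_le:
  fixes g :: "real^'n \<Rightarrow> real"
  assumes Q: "SPD Q"
    and lower: "\<And>x y. m / 2 * normsq Q (x - y) \<le> bregman g G y x"
    and upper: "\<And>x y. bregman g G y x \<le> L / 2 * normsq Q (x - y)"
  shows "m \<le> L"
proof -
  obtain z :: "real^'n" where "z \<noteq> 0"
    using one_neq_zero by blast
  then have "0 < normsq Q (z - 0)"
    using normsq_pos[OF Q] by simp
  moreover have "m / 2 * normsq Q (z - 0) \<le> L / 2 * normsq Q (z - 0)"
    using lower[where x = z and y = 0] upper[where x = z and y = 0] by linarith
  ultimately show ?thesis
    by simp
qed

lemma S11_bregman_nonneg:
  assumes V: "SPD V" and f: "in_S11 f gf V \<mu> L" and "0 \<le> \<mu>"
  shows "0 \<le> bregman f gf y x"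
proof -
  have "0 \<le> \<mu> / 2 * normsq V (x - y)"
    using normsq_nonneg[OF V] \<open>0 \<le> \<mu>\<close> by simp
  also have "\<dots> \<le> bregman f gf y x"
    using f by (simp add: in_S11_def)
  finally show ?thesis .
qed

section \<open>Quadratic forms and generalized eigenvalues\<close>

lemma continuous_on_quadratic_form:
  fixes M :: "real^'n^'n"
  shows "continuous_on S (\<lambda>x. (M *v x) \<bullet> x)"
  by (intro continuous_intros linear_continuous_on matrix_vector_mul_bounded_linear)

lemma quadratic_form_scaleR:
  fixes M :: "real^'n^'n"
  shows "(M *v (c *\<^sub>R x)) \<bullet> (c *\<^sub>R x) = c\<^sup>2 * ((M *v x) \<bullet> x)"
  by (simp add: matrix_vector_mult_scaleR power2_eq_square)

lemma quadratic_form_add_scaleR: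
  fixes M :: "real^'n^'n"
  assumes "transpose M = M"
  shows "(M *v (a + t *\<^sub>R d)) \<bullet> (a + t *\<^sub>R d)
       = (M *v a) \<bullet> a + 2 * t * ((M *v a) \<bullet> d) + t\<^sup>2 * ((M *v d) \<bullet> d)"
  using symmetric_matrix_inner_commute[OF assms, of d a]
  by (simp add: matrix_vector_right_distrib matrix_vector_mult_scaleR inner_add_left inner_add_right
      inner_commute power2_eq_square algebra_simps)

lemma quadratic_form_ge_norm:
  fixes M :: "real^'n^'n"
  assumes pos: "\<And>x. x \<noteq> 0 \<Longrightarrow> 0 < (M *v x) \<bullet> x"
  shows "\<exists>c>0. \<forall>x. c * (norm x)\<^sup>2 \<le> (M *v x) \<bullet> x"
proof -
  have "sphere (0::real^'n) 1 \<noteq> {}"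
    by simp
  then obtain x0 where x0: "x0 \<in> sphere 0 1" "\<forall>y\<in>sphere 0 1. (M *v x0) \<bullet> x0 \<le> (M *v y) \<bullet> y"
    using continuous_attains_inf[OF compact_sphere _ continuous_on_quadratic_form] by blast
  have "(M *v x0) \<bullet> x0 * (norm x)\<^sup>2 \<le> (M *v x) \<bullet> x" for x
  proof (cases "x = 0")
    case False
    then have "(1 / norm x) *\<^sub>R x \<in> sphere 0 1"
      by simp
    then have "(M *v x0) \<bullet> x0 \<le> (M *v ((1 / norm x) *\<^sub>R x)) \<bullet> ((1 / norm x) *\<^sub>R x)"
      using x0 by blast
    then show ?thesis
      unfolding quadratic_form_scaleR using False by (simp add: field_simps power2_eq_square)
  qed simp
  moreover have "x0 \<noteq> 0"
    using x0 by auto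
  then have "0 < (M *v x0) \<bullet> x0"
    by (rule pos)
  ultimately show ?thesis
    by blast
qed

lemma quadratic_form_le_norm:
  fixes M :: "real^'n^'n"
  shows "\<exists>K>0. \<forall>x. \<bar>(M *v x) \<bullet> x\<bar> \<le> K * (norm x)\<^sup>2"
proof -
  obtain K where K: "K > 0" "\<And>x. norm (M *v x) \<le> norm x * K"
    using bounded_linear.pos_bounded[OF matrix_vector_mul_bounded_linear[of M]] by blast
  have "\<bar>(M *v x) \<bullet> x\<bar> \<le> K * (norm x)\<^sup>2" for x
  proof -
    have "\<bar>(M *v x) \<bullet> x\<bar> \<le> norm (M *v x) * norm x"
      by (rule Cauchy_Schwarz_ineq2)
    also have "\<dots> \<le> (norm x * K) * norm x"
      by (rule mult_right_mono[OF K(2)]) simp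
    finally show ?thesis
      by (simp add: power2_eq_square ac_simps)
  qed
  with K(1) show ?thesis
    by blast
qed

text \<open>The perturbation q0 + s v with v = M q0 - l Q q0 would raise the form above zero.\<close>
lemma quadratic_form_max_eigenvector:
  fixes M Q :: "real^'n^'n"
  assumes M: "transpose M = M" and Q: "transpose Q = Q"
    and le: "\<And>q. (M *v q) \<bullet> q \<le> l * ((Q *v q) \<bullet> q)"
    and eq: "(M *v q0) \<bullet> q0 = l * ((Q *v q0) \<bullet> q0)"
  shows "M *v q0 = l *\<^sub>R (Q *v q0)"
proof (rule ccontr)
  define v where "v = M *v q0 - l *\<^sub>R (Q *v q0)"
  define F where "F q = (M *v q) \<bullet> q - l * ((Q *v q) \<bullet> q)" for q
  assume "M *v q0 \<noteq> l *\<^sub>R (Q *v q0)"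
  then have n: "0 < v \<bullet> v"
    by (simp add: v_def)
  define s where "s = (v \<bullet> v) / (\<bar>F v\<bar> + 1)"
  have s: "0 < s" "s * \<bar>F v\<bar> < v \<bullet> v"
    using n by (auto simp: s_def field_simps)
  have "F (q0 + s *\<^sub>R v) = F q0 + 2 * (s * (v \<bullet> v)) + s\<^sup>2 * F v"
    unfolding F_def quadratic_form_add_scaleR[OF M] quadratic_form_add_scaleR[OF Q]
    by (simp add: v_def inner_diff_left algebra_simps)
  moreover have "F (q0 + s *\<^sub>R v) \<le> 0" "F q0 = 0"
    using le eq by (simp_all add: F_def)
  moreover have "s\<^sup>2 * (- \<bar>F v\<bar>) \<le> s\<^sup>2 * F v"
    by (rule mult_left_mono) auto
  then have "- (s * (s * \<bar>F v\<bar>)) \<le> s\<^sup>2 * F v"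
    by (simp add: power2_eq_square)
  moreover have "s * (s * \<bar>F v\<bar>) < s * (v \<bullet> v)" "0 < s * (v \<bullet> v)"
    using s n by simp_all
  ultimately show False
    by linarith
qed

lemma rayleigh_quotient_max:
  fixes M Q :: "real^'n^'n"
  assumes Q: "SPD Q" and M: "transpose M = M"
  obtains l q0 where "q0 \<noteq> 0" "M *v q0 = l *\<^sub>R (Q *v q0)" "\<And>q. (M *v q) \<bullet> q \<le> l * normsq Q q"
proof -
  let ?R = "\<lambda>q. ((M *v q) \<bullet> q) / normsq Q q"
  have "(Q *v q) \<bullet> q \<noteq> 0" if "q \<in> sphere 0 1" for q
    using normsq_pos[OF Q, of q] that by (cases "q = 0") (auto simp: normsq_def)
  then have "continuous_on (sphere 0 1) ?R"
    unfolding normsq_def by (intro continuous_on_divide continuous_on_quadratic_form) auto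
  moreover have "sphere (0::real^'n) 1 \<noteq> {}"
    by simp
  ultimately obtain q0 where q0: "q0 \<in> sphere 0 1" "\<forall>y\<in>sphere 0 1. ?R y \<le> ?R q0"
    using continuous_attains_sup[OF compact_sphere] by blast
  define l where "l = ?R q0"
  have "q0 \<noteq> 0"
    using q0 by auto
  have le: "(M *v q) \<bullet> q \<le> l * normsq Q q" for q
  proof (cases "q = 0")
    case False
    then have "(1 / norm q) *\<^sub>R q \<in> sphere 0 1"
      by simp
    then have "?R ((1 / norm q) *\<^sub>R q) \<le> l"
      using q0 unfolding l_def by blast
    then have "?R q \<le> l"
      unfolding normsq_def quadratic_form_scaleR using False by simp
    then show ?thesis
      using normsq_pos[OF Q False] by (simp add: divide_le_eq mult.commute)
  qed (simp add: normsq_def)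
  moreover have "(M *v q0) \<bullet> q0 = l * normsq Q q0"
    using normsq_pos[OF Q \<open>q0 \<noteq> 0\<close>] by (simp add: l_def)
  ultimately have "M *v q0 = l *\<^sub>R (Q *v q0)"
    using quadratic_form_max_eigenvector[OF M SPD_symmetric[OF Q]] by (simp add: normsq_def)
  with \<open>q0 \<noteq> 0\<close> le show ?thesis
    using that by blast
qed

lemma SPD_orthogonal_independent:
  fixes Q :: "real^'n^'n"
  assumes Q: "SPD Q" and "0 \<notin> S"
    and orth: "\<And>x y. x \<in> S \<Longrightarrow> y \<in> S \<Longrightarrow> x \<noteq> y \<Longrightarrow> (Q *v x) \<bullet> y = 0"
  shows "independent S"
  unfolding independent_explicit_finite_subsets
proof (intro allI impI ballI)
  fix U c w
  assume U: "U \<subseteq> S" "finite U" and sum: "(\<Sum>v\<in>U. c v *\<^sub>R v) = 0" and w: "w \<in> U"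
  have "0 = (Q *v w) \<bullet> (\<Sum>v\<in>U. c v *\<^sub>R v)"
    using sum by simp
  also have "\<dots> = c w * ((Q *v w) \<bullet> w) + (\<Sum>v\<in>U - {w}. c v * ((Q *v w) \<bullet> v))"
    using U(2) w by (simp add: sum.remove inner_add_right inner_sum_right)
  also have "(\<Sum>v\<in>U - {w}. c v * ((Q *v w) \<bullet> v)) = 0"
    using U(1) w by (intro sum.neutral) (auto intro: orth)
  finally have "c w * ((Q *v w) \<bullet> w) = 0"
    by simp
  moreover have "0 < (Q *v w) \<bullet> w"
    using normsq_pos[OF Q, of w] U(1) w \<open>0 \<notin> S\<close> by (auto simp: normsq_def)
  ultimately show "c w = 0"
    by simp
qed

lemma generalized_eigenvalues_finite:
  fixes M Q :: "real^'n^'n"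
  assumes Q: "SPD Q" and M: "transpose M = M"
  shows "finite {c. \<exists>v. v \<noteq> 0 \<and> M *v v = c *\<^sub>R (Q *v v)}"
proof -
  define S where "S = {c. \<exists>v. v \<noteq> 0 \<and> M *v v = c *\<^sub>R (Q *v v)}"
  define eigvec where "eigvec c = (SOME v. v \<noteq> 0 \<and> M *v v = c *\<^sub>R (Q *v v))" for c
  have eigvec: "eigvec c \<noteq> 0" "M *v eigvec c = c *\<^sub>R (Q *v eigvec c)" if "c \<in> S" for c
    using someI_ex[of "\<lambda>v. v \<noteq> 0 \<and> M *v v = c *\<^sub>R (Q *v v)"] that
    by (auto simp: S_def eigvec_def)
  have orth: "(Q *v eigvec c) \<bullet> eigvec d = 0" if "c \<in> S" "d \<in> S" "c \<noteq> d" for c d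
  proof -
    have "c * ((Q *v eigvec c) \<bullet> eigvec d) = d * ((Q *v eigvec c) \<bullet> eigvec d)"
      using symmetric_matrix_inner_commute[OF M, of "eigvec c" "eigvec d"]
        symmetric_matrix_inner_commute[OF SPD_symmetric[OF Q], of "eigvec c" "eigvec d"]
      by (simp add: eigvec that)
    then show ?thesis
      using \<open>c \<noteq> d\<close> by simp
  qed
  have "inj_on eigvec S"
  proof (rule inj_onI, rule ccontr)
    fix c d
    assume "c \<in> S" "d \<in> S" "eigvec c = eigvec d" "c \<noteq> d"
    then have "normsq Q (eigvec c) = 0"
      using orth[of c d] by (simp add: normsq_def)
    then show False
      using normsq_pos[OF Q eigvec(1)[OF \<open>c \<in> S\<close>]] by simp
  qed
  moreover have "independent (eigvec ` S)"
    using eigvec(1) orth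
    by (intro SPD_orthogonal_independent[OF Q]) (force, fastforce)
  then have "finite (eigvec ` S)"
    using independent_bound by blast
  ultimately show ?thesis
    using finite_imageD by (auto simp: S_def)
qed

lemma generalized_eigenvalue_iff:
  fixes M Q :: "real^'n^'n"
  assumes Q: "SPD Q"
  shows "(matrix_inv Q ** M) *v v = c *\<^sub>R v \<longleftrightarrow> M *v v = c *\<^sub>R (Q *v v)"
proof
  assume "(matrix_inv Q ** M) *v v = c *\<^sub>R v"
  then have "Q *v (matrix_inv Q *v (M *v v)) = Q *v (c *\<^sub>R v)"
    by (simp add: matrix_vector_mul_assoc)
  then show "M *v v = c *\<^sub>R (Q *v v)"
    by (simp add: SPD_matrix_inv_cancel[OF Q] matrix_vector_mult_scaleR)
next
  assume "M *v v = c *\<^sub>R (Q *v v)"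
  then show "(matrix_inv Q ** M) *v v = c *\<^sub>R v"
    by (simp add: SPD_matrix_inv_cancel[OF Q] matrix_vector_mult_scaleR
        matrix_vector_mul_assoc[symmetric])
qed

lemma lambda_max_rayleigh:
  fixes M Q :: "real^'n^'n"
  assumes Q: "SPD Q" and M: "transpose M = M"
  obtains q0 where "q0 \<noteq> 0" "M *v q0 = lambda_max (matrix_inv Q ** M) *\<^sub>R (Q *v q0)"
    and "\<And>q. (M *v q) \<bullet> q \<le> lambda_max (matrix_inv Q ** M) * normsq Q q"
proof -
  obtain l q0 where q0: "q0 \<noteq> 0" "M *v q0 = l *\<^sub>R (Q *v q0)"
    and le: "\<And>q. (M *v q) \<bullet> q \<le> l * normsq Q q"
    using rayleigh_quotient_max[OF Q M] by blast
  define S where "S = {c. \<exists>v. v \<noteq> 0 \<and> M *v v = c *\<^sub>R (Q *v v)}"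
  have "c \<le> l" if "c \<in> S" for c
  proof -
    obtain v where v: "v \<noteq> 0" "M *v v = c *\<^sub>R (Q *v v)"
      using \<open>c \<in> S\<close> by (auto simp: S_def)
    then have "c * normsq Q v \<le> l * normsq Q v"
      using le[of v] by (simp add: normsq_def)
    then show "c \<le> l"
      using normsq_pos[OF Q v(1)] by simp
  qed
  moreover have "l \<in> S"
    using q0 by (auto simp: S_def)
  ultimately have "lambda_max (matrix_inv Q ** M) = l"
    unfolding lambda_max_def generalized_eigenvalue_iff[OF Q] S_def[symmetric]
    using generalized_eigenvalues_finite[OF Q M] by (intro Max_eqI) (auto simp: S_def)
  with q0 le that show ?thesis
    by blast
qed

lemma lambda_max_nonneg:
  fixes M Q :: "real^'n^'n"
  assumes Q: "SPD Q" and M: "transpose M = M" and psd: "\<And>q. 0 \<le> (M *v q) \<bullet> q"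
  shows "0 \<le> lambda_max (matrix_inv Q ** M)"
proof -
  obtain q0 where "q0 \<noteq> 0" "M *v q0 = lambda_max (matrix_inv Q ** M) *\<^sub>R (Q *v q0)"
    using lambda_max_rayleigh[OF Q M] by blast
  then have "0 \<le> lambda_max (matrix_inv Q ** M) * normsq Q q0"
    using psd[of q0] by (simp add: normsq_def)
  then show ?thesis
    using normsq_pos[OF Q \<open>q0 \<noteq> 0\<close>] by (simp add: zero_le_mult_iff)
qed

section \<open>Best constants\<close>

lemma cvx_const_bregman_le:
  fixes g :: "real^'n \<Rightarrow> real"
  assumes Q: "SPD Q" and nonneg: "\<And>x y. 0 \<le> bregman g G y x"
  shows "cvx_const g G Q / 2 * normsq Q (x - y) \<le> bregman g G y x"
proof (cases "x = y")
  case True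
  then show ?thesis
    by (simp add: bregman_def normsq_def)
next
  case False
  define S where "S = {m. \<forall>x y. m / 2 * normsq Q (x - y) \<le> bregman g G y x}"
  have n: "0 < normsq Q (x - y)"
    using normsq_pos[OF Q] False by simp
  have "m \<le> 2 * bregman g G y x / normsq Q (x - y)" if "m \<in> S" for m
    using that n by (simp add: S_def field_simps)
  moreover have "0 \<in> S"
    using nonneg by (simp add: S_def)
  ultimately have "Sup S \<le> 2 * bregman g G y x / normsq Q (x - y)"
    by (intro cSup_least) auto
  then show ?thesis
    using n by (simp add: cvx_const_def S_def field_simps)
qed

lemma cvx_const_greatest:
  fixes g :: "real^'n \<Rightarrow> real"
  assumes Q: "SPD Q" and m: "\<And>x y. m / 2 * normsq Q (x - y) \<le> bregman g G y x"
  shows "m \<le> cvx_const g G Q"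
proof -
  define S where "S = {m. \<forall>x y. m / 2 * normsq Q (x - y) \<le> bregman g G y x}"
  obtain z :: "real^'n" where "z \<noteq> 0"
    using one_neq_zero by blast
  then have n: "0 < normsq Q (z - 0)"
    using normsq_pos[OF Q] by simp
  have "m' \<le> 2 * bregman g G 0 z / normsq Q (z - 0)" if "m' \<in> S" for m'
  proof -
    have "m' / 2 * normsq Q (z - 0) \<le> bregman g G 0 z"
      using that unfolding S_def by blast
    then show ?thesis
      using n by (simp add: field_simps)
  qed
  then have "bdd_above S"
    by (rule bdd_aboveI)
  moreover have "m \<in> S"
    using m by (simp add: S_def)
  ultimately show ?thesis
    unfolding cvx_const_def S_def[symmetric] by (simp add: cSup_upper)
qed

lemma smooth_const_bregman_le:
  fixes g :: "real^'n \<Rightarrow> real"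
  assumes Q: "SPD Q" and ex: "\<exists>L. \<forall>x y. bregman g G y x \<le> L / 2 * normsq Q (x - y)"
  shows "bregman g G y x \<le> smooth_const g G Q / 2 * normsq Q (x - y)"
proof (cases "x = y")
  case True
  then show ?thesis
    by (simp add: bregman_def normsq_def)
next
  case False
  define S where "S = {L. \<forall>x y. bregman g G y x \<le> L / 2 * normsq Q (x - y)}"
  have n: "0 < normsq Q (x - y)"
    using normsq_pos[OF Q] False by simp
  have "2 * bregman g G y x / normsq Q (x - y) \<le> L" if "L \<in> S" for L
    using that n by (simp add: S_def field_simps)
  moreover have "S \<noteq> {}"
    using ex by (simp add: S_def)
  ultimately have "2 * bregman g G y x / normsq Q (x - y) \<le> Inf S"
    by (intro cInf_greatest) auto
  then show ?thesis
    using n by (simp add: smooth_const_def S_def field_simps)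
qed

lemma lip_const_lipschitz:
  fixes F :: "real^'n \<Rightarrow> real^'n"
  assumes M: "SPD M"
    and ex: "\<exists>L. 0 \<le> L \<and> (\<forall>x y. sqrt (normsq M (F x - F y)) \<le> L * sqrt (normsq M (x - y)))"
  shows "sqrt (normsq M (F x - F y)) \<le> lip_const F M * sqrt (normsq M (x - y))"
proof (cases "x = y")
  case True
  then show ?thesis
    by (simp add: normsq_def)
next
  case False
  define S where "S = {L. 0 \<le> L \<and> (\<forall>x y. sqrt (normsq M (F x - F y)) \<le> L * sqrt (normsq M (x - y)))}"
  have n: "0 < sqrt (normsq M (x - y))"
    using normsq_pos[OF M] False by simp
  have "sqrt (normsq M (F x - F y)) / sqrt (normsq M (x - y)) \<le> L" if "L \<in> S" for L
    using that n by (simp add: S_def field_simps)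
  moreover have "S \<noteq> {}"
    using ex by (simp add: S_def)
  ultimately have "sqrt (normsq M (F x - F y)) / sqrt (normsq M (x - y)) \<le> Inf S"
    by (intro cInf_greatest) auto
  then show ?thesis
    using n by (simp add: lip_const_def S_def field_simps)
qed

section \<open>The Schur complement B V^{-1} B^T and the function h_B\<close>

lemma schur_quadratic_form:
  fixes B :: "real^'m^'n" and W :: "real^'m^'m"
  shows "((B ** W ** transpose B) *v q) \<bullet> q = normsq W (transpose B *v q)"
  by (simp add: normsq_def matrix_vector_mul_assoc[symmetric] inner_matrix_vector_transpose[of B]
      del: transpose_matrix_vector)

lemma schur_symmetric:
  fixes B :: "real^'m^'n" and V :: "real^'m^'m"
  assumes "SPD V"
  shows "transpose (B ** matrix_inv V ** transpose B) = B ** matrix_inv V ** transpose B"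
  using SPD_symmetric[OF SPD_matrix_inv_SPD[OF assms]]
  by (simp add: matrix_transpose_mul matrix_mul_assoc)

lemma bregman_hB:
  fixes B :: "real^'m^'n" and V :: "real^'m^'m"
  assumes "SPD V"
  shows "bregman (hB h B V) (ghB gh B V) y x
       = bregman h gh y x + 1/2 * normsq (B ** matrix_inv V ** transpose B) (y - x)"
  using symmetric_matrix_inner_commute[OF schur_symmetric[OF assms], where x = x and y = y]
  unfolding bregman_def hB_def ghB_def normsq_def
  by (simp add: matrix_vector_mult_diff_distrib inner_diff_left inner_diff_right inner_add_left
      inner_commute algebra_simps del: transpose_matrix_vector)

lemma bregman_hB_nonneg:
  fixes B :: "real^'m^'n" and V :: "real^'m^'m"
  assumes "SPD V" and h_nonneg: "\<And>x y. 0 \<le> bregman h gh y x"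
  shows "0 \<le> bregman (hB h B V) (ghB gh B V) y x"
  using h_nonneg[of y x] normsq_nonneg[OF SPD_matrix_inv_SPD[OF assms(1)], of "transpose B *v (y - x)"]
  unfolding bregman_hB[OF assms(1)] normsq_def[of "B ** _ ** _"] schur_quadratic_form
  by simp

text \<open>Full row rank makes the Schur complement positive definite.\<close>
lemma hB_strongly_convex:
  fixes B :: "real^'m^'n" and V :: "real^'m^'m" and Q :: "real^'n^'n"
  assumes V: "SPD V" and "rank B = CARD('n)" and h_nonneg: "\<And>x y. 0 \<le> bregman h gh y x"
  shows "\<exists>m>0. \<forall>x y. m / 2 * normsq Q (x - y) \<le> bregman (hB h B V) (ghB gh B V) y x"
proof -
  let ?M = "B ** matrix_inv V ** transpose B"
  have "inj ((*v) (transpose B))"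
    using \<open>rank B = CARD('n)\<close> by (simp add: full_rank_injective[symmetric] rank_transpose)
  then have Bt: "transpose B *v q \<noteq> 0" if "q \<noteq> 0" for q
    using that by (metis inj_eq matrix_vector_mult_0_right)
  have "0 < (?M *v q) \<bullet> q" if "q \<noteq> 0" for q
    unfolding schur_quadratic_form by (rule normsq_pos[OF SPD_matrix_inv_SPD[OF V] Bt[OF that]])
  then obtain c where c: "c > 0" "\<And>x. c * (norm x)\<^sup>2 \<le> (?M *v x) \<bullet> x"
    using quadratic_form_ge_norm[of ?M] by blast
  obtain K where K: "K > 0" "\<And>x. \<bar>(Q *v x) \<bullet> x\<bar> \<le> K * (norm x)\<^sup>2"
    using quadratic_form_le_norm[of Q] by blast
  have "c / K / 2 * normsq Q (x - y) \<le> bregman (hB h B V) (ghB gh B V) y x" for x y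
  proof -
    have "normsq Q (y - x) \<le> K * (norm (y - x))\<^sup>2"
      using abs_le_D1[OF K(2)[of "y - x"]] by (simp add: normsq_def)
    then have "c / K * normsq Q (y - x) \<le> c / K * (K * (norm (y - x))\<^sup>2)"
      using K(1) c(1) by (intro mult_left_mono) auto
    also have "\<dots> \<le> normsq ?M (y - x)"
      using K(1) c(2)[of "y - x"] by (simp add: normsq_def)
    finally have "c / K / 2 * normsq Q (x - y) \<le> 1/2 * normsq ?M (y - x)"
      by (simp add: normsq_minus_commute[of Q x y])
    then show ?thesis
      using h_nonneg[of y x] unfolding bregman_hB[OF V] by linarith
  qed
  with c(1) K(1) show ?thesis
    by (intro exI[of _ "c / K"]) simp
qed

lemma hB_smooth:
  fixes B :: "real^'m^'n" and V :: "real^'m^'m" and Q :: "real^'n^'n"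
  assumes V: "SPD V" and Q: "SPD Q"
    and h_grad: "\<And>x. (h has_derivative (\<lambda>d. gh x \<bullet> d)) (at x)"
    and gh_lip: "\<exists>L. \<forall>x y. norm (gh x - gh y) \<le> L * norm (x - y)"
  shows "\<exists>L. \<forall>x y. bregman (hB h B V) (ghB gh B V) y x \<le> L / 2 * normsq Q (x - y)"
proof -
  let ?M = "B ** matrix_inv V ** transpose B"
  obtain Lg where Lg: "\<forall>x y. norm (gh x - gh y) \<le> Lg * norm (x - y)"
    using gh_lip by blast
  obtain K where K: "K > 0" "\<And>x. \<bar>(?M *v x) \<bullet> x\<bar> \<le> K * (norm x)\<^sup>2"
    using quadratic_form_le_norm[of ?M] by blast
  obtain c where c: "c > 0" "\<And>x. c * (norm x)\<^sup>2 \<le> (Q *v x) \<bullet> x"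
    using quadratic_form_ge_norm[of Q] Q by (auto simp: SPD_def)
  define L where "L = 2 * (\<bar>Lg\<bar> + K) / c"
  have "bregman (hB h B V) (ghB gh B V) y x \<le> L / 2 * normsq Q (x - y)" for x y
  proof -
    have "bregman h gh y x \<le> \<bar>Lg\<bar> * (norm (x - y))\<^sup>2"
      using bregman_le_lipschitz_gradient[OF h_grad Lg, where x = x and y = y]
      by (simp add: norm_minus_commute)
    moreover have "1/2 * normsq ?M (y - x) \<le> K * (norm (x - y))\<^sup>2"
      using K(1) K(2)[of "y - x"] by (simp add: normsq_def norm_minus_commute)
    ultimately have "bregman (hB h B V) (ghB gh B V) y x \<le> (\<bar>Lg\<bar> + K) * (norm (x - y))\<^sup>2"
      unfolding bregman_hB[OF V] by (simp add: algebra_simps)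
    also have "\<dots> \<le> (\<bar>Lg\<bar> + K) * (normsq Q (x - y) / c)"
      using K(1) c(1) c(2)[of "x - y"] by (intro mult_left_mono) (simp_all add: normsq_def field_simps)
    also have "\<dots> = L / 2 * normsq Q (x - y)"
      using c(1) by (simp add: L_def field_simps)
    finally show ?thesis .
  qed
  then show ?thesis
    by blast
qed

lemma hB_best_constants:
  fixes B :: "real^'m^'n" and V :: "real^'m^'m" and Q :: "real^'n^'n"
  assumes V: "SPD V" and Q: "SPD Q" and rank: "rank B = CARD('n)"
    and h_cvx: "convex_on UNIV h"
    and h_grad: "\<And>x. (h has_derivative (\<lambda>d. gh x \<bullet> d)) (at x)"
    and gh_lip: "\<exists>L. \<forall>x y. norm (gh x - gh y) \<le> L * norm (x - y)"
  defines "\<mu> \<equiv> cvx_const (hB h B V) (ghB gh B V) Q"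
    and "L \<equiv> smooth_const (hB h B V) (ghB gh B V) Q"
  shows "0 < \<mu>" and "\<mu> \<le> L"
    and "\<And>x y. \<mu> / 2 * normsq Q (x - y) \<le> bregman (hB h B V) (ghB gh B V) y x"
    and "\<And>x y. bregman (hB h B V) (ghB gh B V) y x \<le> L / 2 * normsq Q (x - y)"
proof -
  have h_nonneg: "\<And>x y. 0 \<le> bregman h gh y x"
    by (rule convex_bregman_nonneg[OF h_cvx h_grad])
  show lower: "\<mu> / 2 * normsq Q (x - y) \<le> bregman (hB h B V) (ghB gh B V) y x" for x y
    unfolding \<mu>_def by (rule cvx_const_bregman_le[OF Q bregman_hB_nonneg[OF V h_nonneg]])
  show upper: "bregman (hB h B V) (ghB gh B V) y x \<le> L / 2 * normsq Q (x - y)" for x y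
    unfolding L_def by (rule smooth_const_bregman_le[OF Q hB_smooth[OF V Q h_grad gh_lip]])
  obtain m where "m > 0" "\<forall>x y. m / 2 * normsq Q (x - y) \<le> bregman (hB h B V) (ghB gh B V) y x"
    using hB_strongly_convex[OF V rank h_nonneg] by blast
  then show "0 < \<mu>"
    using cvx_const_greatest[OF Q] unfolding \<mu>_def by (meson less_le_trans)
  show "\<mu> \<le> L"
    by (rule bregman_bounds_le[OF Q lower upper])
qed

lemma schur_lambda_max:
  fixes B :: "real^'m^'n" and V :: "real^'m^'m" and Q :: "real^'n^'n"
  assumes V: "SPD V" and Q: "SPD Q"
  defines "lam \<equiv> lambda_max (matrix_inv Q ** B ** matrix_inv V ** transpose B)"
  shows "0 \<le> lam" and "((B ** matrix_inv V ** transpose B) *v q) \<bullet> q \<le> lam * normsq Q q"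
proof -
  have lam: "lam = lambda_max (matrix_inv Q ** (B ** matrix_inv V ** transpose B))"
    by (simp add: lam_def matrix_mul_assoc)
  show "0 \<le> lam"
    unfolding lam using normsq_nonneg[OF SPD_matrix_inv_SPD[OF V]]
    by (intro lambda_max_nonneg[OF Q schur_symmetric[OF V]]) (simp add: schur_quadratic_form)
  show "((B ** matrix_inv V ** transpose B) *v q) \<bullet> q \<le> lam * normsq Q q"
    unfolding lam using lambda_max_rayleigh[OF Q schur_symmetric[OF V]] by blast
qed

lemma eop_lip_const:
  fixes V :: "real^'m^'m"
  assumes V: "SPD V" and f: "in_S11 f gf V \<mu> L" and "0 \<le> \<mu>" and "0 < L"
  shows "sqrt (normsq V (eop gf V x - eop gf V y)) \<le> lip_const (eop gf V) V * sqrt (normsq V (x - y))"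
proof (rule lip_const_lipschitz[OF V])
  have upper: "\<And>x y. bregman f gf y x \<le> L / 2 * normsq V (x - y)"
    using f by (simp add: in_S11_def)
  have "sqrt (normsq V (eop gf V x - eop gf V y)) \<le> sqrt (2 * (1 + L\<^sup>2)) * sqrt (normsq V (x - y))" for x y
  proof -
    have "eop gf V x - eop gf V y = (x - y) - matrix_inv V *v (gf x - gf y)"
      by (simp add: eop_def matrix_vector_mult_diff_distrib)
    then have "normsq V (eop gf V x - eop gf V y)
        \<le> 2 * normsq V (x - y) + 2 * normsq V (matrix_inv V *v (gf x - gf y))"
      by (simp only: normsq_diff_le[OF V])
    also have "\<dots> \<le> 2 * (1 + L\<^sup>2) * normsq V (x - y)"
      using gradient_lipschitz_normsq[OF V \<open>0 < L\<close> S11_bregman_nonneg[OF V f \<open>0 \<le> \<mu>\<close>] upper,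
          where x = y and y = x]
      unfolding normsq_matrix_inv_apply[OF V] by (simp add: algebra_simps)
    finally have "sqrt (normsq V (eop gf V x - eop gf V y)) \<le> sqrt (2 * (1 + L\<^sup>2) * normsq V (x - y))"
      by (rule real_sqrt_le_mono)
    then show ?thesis
      by (simp add: real_sqrt_mult)
  qed
  then show "\<exists>K. 0 \<le> K \<and> (\<forall>x y. sqrt (normsq V (eop gf V x - eop gf V y)) \<le> K * sqrt (normsq V (x - y)))"
    by (intro exI[of _ "sqrt (2 * (1 + L\<^sup>2))"]) auto
qed

section \<open>One step of the inexact IMEX scheme\<close>

lemma imex_primal_step_eq:
  fixes B :: "real^'m^'n" and V :: "real^'m^'m"
  assumes V: "SPD V" and "\<alpha> \<noteq> 0"
    and saddle1: "gf ustar + transpose B *v pstar = 0"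
    and r: "r = gf u1 + (1 / \<alpha>) *\<^sub>R (V *v (u1 - u + \<alpha> *\<^sub>R (matrix_inv V *v (transpose B *v p1))))"
  shows "V *v (u1 - u) = \<alpha> *\<^sub>R (r - (gf u1 - gf ustar) - transpose B *v (p1 - pstar))"
proof -
  have "\<alpha> *\<^sub>R r = \<alpha> *\<^sub>R gf u1 + V *v (u1 - u) + \<alpha> *\<^sub>R (transpose B *v p1)"
    using \<open>\<alpha> \<noteq> 0\<close>
    by (simp add: r scaleR_add_right matrix_vector_right_distrib matrix_vector_mult_scaleR
        SPD_matrix_inv_cancel[OF V] del: transpose_matrix_vector)
  then show ?thesis
    using saddle1 by (simp add: matrix_vector_mult_diff_distrib algebra_simps del: transpose_matrix_vector)
qed

text \<open>The new iterate u1 enters only by adding and subtracting e(u1); this splits off the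
  cross term caused by evaluating e at the old iterate.\<close>
lemma imex_dual_step_eq:
  fixes B :: "real^'m^'n" and V :: "real^'m^'m" and Q :: "real^'n^'n"
  assumes Q: "SPD Q"
    and saddle1: "gf ustar + transpose B *v pstar = 0"
    and saddle2: "B *v ustar = gh pstar"
    and uh: "uh = u - matrix_inv V *v (gf u + transpose B *v p)"
    and p1: "p1 = p - \<alpha> *\<^sub>R (matrix_inv Q *v (gh p - B *v uh))"
  shows "Q *v (p1 - p) = (- \<alpha>) *\<^sub>R ((ghB gh B V p - ghB gh B V pstar) - B *v (eop gf V u - eop gf V u1)
           - B *v (u1 - ustar) + B *v (matrix_inv V *v (gf u1 - gf ustar)))"
proof -
  have "p1 - p = (- \<alpha>) *\<^sub>R (matrix_inv Q *v (gh p - B *v uh))"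
    by (simp add: p1)
  then have "Q *v (p1 - p) = (- \<alpha>) *\<^sub>R (gh p - B *v uh)"
    by (simp only: matrix_vector_mult_scaleR SPD_matrix_inv_cancel[OF Q])
  moreover have "gf ustar = - (transpose B *v pstar)"
    using saddle1 by (simp add: eq_neg_iff_add_eq_0 del: transpose_matrix_vector)
  then have "gh p - B *v uh = (ghB gh B V p - ghB gh B V pstar) - B *v (eop gf V u - eop gf V u1)
      - B *v (u1 - ustar) + B *v (matrix_inv V *v (gf u1 - gf ustar))"
    unfolding ghB_def eop_def uh saddle2[symmetric]
    by (simp add: matrix_vector_mul_assoc[symmetric] algebra_simps del: transpose_matrix_vector)
  ultimately show ?thesis
    by simp
qed

lemma imex_step_energy_identity:
  fixes B :: "real^'m^'n" and V :: "real^'m^'m" and Q :: "real^'n^'n"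
  assumes V: "SPD V" and Q: "SPD Q" and "\<alpha> \<noteq> 0"
    and saddle1: "gf ustar + transpose B *v pstar = 0"
    and saddle2: "B *v ustar = gh pstar"
    and uh: "uh = u - matrix_inv V *v (gf u + transpose B *v p)"
    and p1: "p1 = p - \<alpha> *\<^sub>R (matrix_inv Q *v (gh p - B *v uh))"
    and r: "r = gf u1 + (1 / \<alpha>) *\<^sub>R (V *v (u1 - u + \<alpha> *\<^sub>R (matrix_inv V *v (transpose B *v p1))))"
  shows "(1/2 * normsq V (u1 - ustar) + 1/2 * normsq Q (p1 - pstar))
         - (1/2 * normsq V (u - ustar) + 1/2 * normsq Q (p - pstar))
       = \<alpha> * (r \<bullet> (u1 - ustar) - (gf u1 - gf ustar) \<bullet> (u1 - ustar)
              - (matrix_inv V *v (gf u1 - gf ustar)) \<bullet> (transpose B *v (p1 - pstar))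
              - (ghB gh B V p - ghB gh B V pstar) \<bullet> (p1 - pstar)
              + (B *v (eop gf V u - eop gf V u1)) \<bullet> (p1 - pstar))
         - 1/2 * normsq V (u1 - u) - 1/2 * normsq Q (p1 - p)"
proof -
  define du dp g where "du = u1 - ustar" and "dp = p1 - pstar" and "g = gf u1 - gf ustar"
  have u_step: "V *v (u1 - u) = \<alpha> *\<^sub>R (r - g - transpose B *v dp)"
    unfolding g_def dp_def by (rule imex_primal_step_eq[OF V \<open>\<alpha> \<noteq> 0\<close> saddle1 r])
  have p_step: "Q *v (p1 - p) = (- \<alpha>) *\<^sub>R ((ghB gh B V p - ghB gh B V pstar)
      - B *v (eop gf V u - eop gf V u1) - B *v du + B *v (matrix_inv V *v g))"
    unfolding du_def g_def by (rule imex_dual_step_eq[OF Q saddle1 saddle2 uh p1])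
  have "(V *v (u1 - u)) \<bullet> du + (Q *v (p1 - p)) \<bullet> dp
      = \<alpha> * (r \<bullet> du - g \<bullet> du - (matrix_inv V *v g) \<bullet> (transpose B *v dp)
             - (ghB gh B V p - ghB gh B V pstar) \<bullet> dp + (B *v (eop gf V u - eop gf V u1)) \<bullet> dp)"
    unfolding u_step p_step using inner_matrix_vector_transpose[of B du dp] inner_matrix_vector_transpose[of B "matrix_inv V *v g" dp]
    by (simp add: inner_diff_left inner_add_left inner_commute algebra_simps del: transpose_matrix_vector)
  moreover have "1/2 * normsq V (u1 - ustar) - 1/2 * normsq V (u - ustar)
      = (V *v (u1 - u)) \<bullet> du - 1/2 * normsq V (u1 - u)"
    unfolding du_def by (rule half_normsq_diff_eq[OF V])
  moreover have "1/2 * normsq Q (p1 - pstar) - 1/2 * normsq Q (p - pstar)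
      = (Q *v (p1 - p)) \<bullet> dp - 1/2 * normsq Q (p1 - p)"
    unfolding dp_def by (rule half_normsq_diff_eq[OF Q])
  ultimately show ?thesis
    by (simp add: du_def dp_def g_def algebra_simps)
qed

lemma S11_gradient_coupling_le:
  fixes V :: "real^'m^'m"
  assumes V: "SPD V" and f: "in_S11 f gf V \<mu> L" and "0 \<le> \<mu>" and "0 < L"
  shows "- ((gf x - gf y) \<bullet> (x - y)) - (matrix_inv V *v (gf x - gf y)) \<bullet> w
       \<le> - (\<mu> / 2 * normsq V (x - y)) + L / 2 * normsq (matrix_inv V) w"
proof -
  define N where "N = normsq (matrix_inv V) (gf x - gf y)"
  have lower: "\<And>x y. \<mu> / 2 * normsq V (x - y) \<le> bregman f gf y x"
    and upper: "\<And>x y. bregman f gf y x \<le> L / 2 * normsq V (x - y)"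
    using f by (auto simp: in_S11_def)
  have "\<mu> / 2 * normsq V (x - y) + \<mu> / 2 * normsq V (x - y) \<le> (gf x - gf y) \<bullet> (x - y)"
    using lower[where x = x and y = y] lower[where x = y and y = x, unfolded normsq_minus_commute[of V y x]]
      bregman_add_swap[of f gf x y] by linarith
  moreover have "N / L \<le> (gf x - gf y) \<bullet> (x - y)"
    unfolding N_def
    by (rule gradient_cocoercive[OF V \<open>0 < L\<close> S11_bregman_nonneg[OF V f \<open>0 \<le> \<mu>\<close>] upper])
  moreover have "2 * ((matrix_inv V *v (gf x - gf y)) \<bullet> (- w))
      \<le> (1 / L) * N + normsq (matrix_inv V) (- w) / (1 / L)"
    unfolding N_def using \<open>0 < L\<close> by (intro inner_le_normsq_young[OF SPD_matrix_inv_SPD[OF V]]) simp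
  then have "- (2 * ((matrix_inv V *v (gf x - gf y)) \<bullet> w))
      \<le> N / L + 2 * (L / 2 * normsq (matrix_inv V) w)"
    using normsq_scaleR[of "matrix_inv V" "- 1" w] by (simp add: mult.commute)
  ultimately show ?thesis
    by linarith
qed

lemma hB_gradient_coupling_le:
  fixes B :: "real^'m^'n" and V :: "real^'m^'m" and Q :: "real^'n^'n"
  assumes V: "SPD V" and h_nonneg: "\<And>x y. 0 \<le> bregman h gh y x"
    and hB_lower: "\<And>x y. \<mu> / 2 * normsq Q (x - y) \<le> bregman (hB h B V) (ghB gh B V) y x"
    and "0 \<le> L" "L \<le> 2"
  shows "L / 2 * normsq (matrix_inv V) (transpose B *v (q - q')) - (ghB gh B V q - ghB gh B V q') \<bullet> (q - q')
       \<le> - ((2 - L) * \<mu> / 2 * normsq Q (q - q'))"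
proof -
  define W H K where "W = normsq (matrix_inv V) (transpose B *v (q - q'))"
    and "H = (gh q - gh q') \<bullet> (q - q')" and "K = (ghB gh B V q - ghB gh B V q') \<bullet> (q - q')"
  have "K = H + W"
    unfolding K_def H_def W_def ghB_def schur_quadratic_form[symmetric]
    by (simp add: matrix_vector_mult_diff_distrib inner_diff_left inner_add_left)
  have "0 \<le> H"
    using h_nonneg[of q q'] h_nonneg[of q' q] bregman_add_swap[of h gh q q'] by (simp add: H_def)
  have "\<mu> * normsq Q (q - q') \<le> K"
    using hB_lower[where x = q and y = q'] hB_lower[where x = q' and y = q]
      bregman_add_swap[of "hB h B V" "ghB gh B V" q q'] normsq_minus_commute[of Q q q']
    by (simp add: K_def)
  then have "(2 - L) / 2 * (\<mu> * normsq Q (q - q')) \<le> (2 - L) / 2 * K"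
    using \<open>L \<le> 2\<close> by (intro mult_left_mono) auto
  moreover have "0 \<le> L / 2 * H"
    using \<open>0 \<le> L\<close> \<open>0 \<le> H\<close> by simp
  moreover have "L / 2 * W - K = - ((2 - L) / 2 * K) - L / 2 * H"
    using \<open>K = H + W\<close> by (simp add: field_simps)
  moreover have "(2 - L) * \<mu> / 2 * normsq Q (q - q') = (2 - L) / 2 * (\<mu> * normsq Q (q - q'))"
    by simp
  ultimately show ?thesis
    unfolding W_def[symmetric] K_def[symmetric] by linarith
qed

lemma schur_inner_le:
  fixes B :: "real^'m^'n" and V :: "real^'m^'m" and Q :: "real^'n^'n"
  assumes V: "SPD V" and "0 \<le> lam"
    and lam: "\<And>q. ((B ** matrix_inv V ** transpose B) *v q) \<bullet> q \<le> lam * normsq Q q"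
  shows "(B *v v) \<bullet> q \<le> sqrt lam * sqrt (normsq Q q) * sqrt (normsq V v)"
proof -
  have "(B *v v) \<bullet> q = (transpose B *v q) \<bullet> v"
    using inner_matrix_vector_transpose[of B v q] by (simp add: inner_commute)
  also have "\<dots> \<le> sqrt (normsq (matrix_inv V) (transpose B *v q)) * sqrt (normsq V v)"
    by (rule inner_le_sqrt_normsq_dual[OF V])
  also have "\<dots> \<le> sqrt lam * sqrt (normsq Q q) * sqrt (normsq V v)"
  proof (rule mult_right_mono)
    show "sqrt (normsq (matrix_inv V) (transpose B *v q)) \<le> sqrt lam * sqrt (normsq Q q)"
      using lam[of q] unfolding schur_quadratic_form by (metis real_sqrt_le_mono real_sqrt_mult)
  qed (simp add: normsq_nonneg[OF V])
  finally show ?thesis .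
qed

lemma young_two_products:
  fixes c a b X Y :: real
  shows "2 * (c * (a * X + b * Y)) \<le> X\<^sup>2 + Y\<^sup>2 + c\<^sup>2 * (a\<^sup>2 + b\<^sup>2)"
proof -
  have "0 \<le> (X - c * a)\<^sup>2 + (Y - c * b)\<^sup>2"
    by simp
  then show ?thesis
    by (simp add: power2_eq_square algebra_simps)
qed

lemma imex_dissipation_le:
  fixes B :: "real^'m^'n" and V :: "real^'m^'m" and Q :: "real^'n^'n"
  assumes V: "SPD V" and residual: "normsq (matrix_inv V) r \<le> \<epsilon>"
    and f: "in_S11 f gf V \<mu> L" and "0 < \<mu>" and "\<mu> \<le> L" and "L < 2"
    and h_nonneg: "\<And>x y. 0 \<le> bregman h gh y x"
    and hB_lower: "\<And>x y. \<mu>h / 2 * normsq Q (x - y) \<le> bregman (hB h B V) (ghB gh B V) y x"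
  shows "r \<bullet> (x - y) - (gf x - gf y) \<bullet> (x - y)
           - (matrix_inv V *v (gf x - gf y)) \<bullet> (transpose B *v (q - q'))
           - (ghB gh B V q - ghB gh B V q') \<bullet> (q - q')
         \<le> \<epsilon> / \<mu> - \<mu> / 4 * normsq V (x - y) - (2 - L) * \<mu>h / 2 * normsq Q (q - q')"
proof -
  define W where "W = normsq (matrix_inv V) (transpose B *v (q - q'))"
  have "2 * (r \<bullet> (x - y)) \<le> (2 / \<mu>) * normsq (matrix_inv V) r + normsq V (x - y) / (2 / \<mu>)"
    using \<open>0 < \<mu>\<close> by (intro inner_le_normsq_young_dual[OF V]) simp
  then have "r \<bullet> (x - y) \<le> \<epsilon> / \<mu> + \<mu> / 4 * normsq V (x - y)"
    using residual \<open>0 < \<mu>\<close> by (simp add: field_simps)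
  moreover have "- ((gf x - gf y) \<bullet> (x - y)) - (matrix_inv V *v (gf x - gf y)) \<bullet> (transpose B *v (q - q'))
      \<le> - (\<mu> / 2 * normsq V (x - y)) + L / 2 * W"
    unfolding W_def using \<open>0 < \<mu>\<close> \<open>\<mu> \<le> L\<close> by (intro S11_gradient_coupling_le[OF V f]) auto
  moreover have "L / 2 * W - (ghB gh B V q - ghB gh B V q') \<bullet> (q - q') \<le> - ((2 - L) * \<mu>h / 2 * normsq Q (q - q'))"
    unfolding W_def using \<open>0 < \<mu>\<close> \<open>\<mu> \<le> L\<close> \<open>L < 2\<close>
    by (intro hB_gradient_coupling_le[OF V h_nonneg hB_lower]) auto
  ultimately show ?thesis
    by linarith
qed

lemma imex_cross_terms_le:
  fixes B :: "real^'m^'n" and V :: "real^'m^'m" and Q :: "real^'n^'n"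
  assumes V: "SPD V" and Q: "SPD Q" and "0 \<le> \<alpha>"
    and h_nonneg: "\<And>x y. 0 \<le> bregman h gh y x"
    and hB_upper: "\<And>x y. bregman (hB h B V) (ghB gh B V) y x \<le> Lh / 2 * normsq Q (x - y)"
    and "0 < Lh"
    and e_lip: "\<And>x y. sqrt (normsq V (eop gf V x - eop gf V y)) \<le> Le * sqrt (normsq V (x - y))"
    and lam: "\<And>q. ((B ** matrix_inv V ** transpose B) *v q) \<bullet> q \<le> lam * normsq Q q"
    and "0 \<le> lam"
  shows "\<alpha> * ((ghB gh B V p1 - ghB gh B V p) \<bullet> d + (B *v (eop gf V u - eop gf V u1)) \<bullet> d)
       \<le> (normsq Q (p1 - p) + normsq V (u1 - u) + \<alpha>\<^sup>2 * (Lh\<^sup>2 + Le\<^sup>2 * lam) * normsq Q d) / 2"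
proof -
  define X Y Z where "X = normsq Q (p1 - p)" and "Y = normsq V (u1 - u)" and "Z = normsq Q d"
  have X: "0 \<le> X" and Y: "0 \<le> Y" and Z: "0 \<le> Z"
    using normsq_nonneg[OF Q] normsq_nonneg[OF V] by (simp_all add: X_def Y_def Z_def)
  have "(ghB gh B V p1 - ghB gh B V p) \<bullet> d \<le> Lh * sqrt Z * sqrt X"
    using gradient_inner_le[OF Q \<open>0 < Lh\<close> bregman_hB_nonneg[OF V h_nonneg] hB_upper, of p1 p d]
    by (simp add: X_def Z_def mult_ac)
  moreover have "(B *v (eop gf V u - eop gf V u1)) \<bullet> d
      \<le> sqrt lam * sqrt Z * sqrt (normsq V (eop gf V u - eop gf V u1))"
    unfolding Z_def by (rule schur_inner_le[OF V \<open>0 \<le> lam\<close> lam])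
  moreover have "sqrt lam * sqrt Z * sqrt (normsq V (eop gf V u - eop gf V u1)) \<le> sqrt lam * sqrt Z * (Le * sqrt Y)"
    using e_lip[of u u1] normsq_minus_commute[of V u u1] Z \<open>0 \<le> lam\<close>
    by (intro mult_left_mono) (simp_all add: Y_def)
  moreover have "sqrt Z * (Lh * sqrt X + (Le * sqrt lam) * sqrt Y)
      = Lh * sqrt Z * sqrt X + sqrt lam * sqrt Z * (Le * sqrt Y)"
    by (simp add: algebra_simps)
  ultimately have "(ghB gh B V p1 - ghB gh B V p) \<bullet> d + (B *v (eop gf V u - eop gf V u1)) \<bullet> d
      \<le> sqrt Z * (Lh * sqrt X + (Le * sqrt lam) * sqrt Y)"
    by linarith
  from mult_left_mono[OF this \<open>0 \<le> \<alpha>\<close>]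
  have "\<alpha> * ((ghB gh B V p1 - ghB gh B V p) \<bullet> d + (B *v (eop gf V u - eop gf V u1)) \<bullet> d)
      \<le> (\<alpha> * sqrt Z) * (Lh * sqrt X + (Le * sqrt lam) * sqrt Y)"
    by (simp add: mult.assoc)
  also have "\<dots> \<le> ((sqrt X)\<^sup>2 + (sqrt Y)\<^sup>2 + (\<alpha> * sqrt Z)\<^sup>2 * (Lh\<^sup>2 + (Le * sqrt lam)\<^sup>2)) / 2"
    using young_two_products[of "\<alpha> * sqrt Z" Lh "sqrt X" "Le * sqrt lam" "sqrt Y"] by simp
  also have "\<dots> = (X + Y + \<alpha>\<^sup>2 * (Lh\<^sup>2 + Le\<^sup>2 * lam) * Z) / 2"
    using X Y Z \<open>0 \<le> lam\<close> by (simp add: power_mult_distrib)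
  finally show ?thesis
    by (simp add: X_def Y_def Z_def)
qed

lemma imex_step_contraction:
  fixes B :: "real^'m^'n" and V :: "real^'m^'m" and Q :: "real^'n^'n"
  assumes V: "SPD V" and Q: "SPD Q"
    and saddle1: "gf ustar + transpose B *v pstar = 0"
    and saddle2: "B *v ustar = gh pstar"
    and uh: "uh = u - matrix_inv V *v (gf u + transpose B *v p)"
    and p1: "p1 = p - \<alpha> *\<^sub>R (matrix_inv Q *v (gh p - B *v uh))"
    and residual: "normsq (matrix_inv V)
        (gf u1 + (1 / \<alpha>) *\<^sub>R (V *v (u1 - u + \<alpha> *\<^sub>R (matrix_inv V *v (transpose B *v p1))))) \<le> \<epsilon>"
    and f: "in_S11 f gf V \<mu> L" and "0 < \<mu>" and "\<mu> \<le> L" and "L < 2"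
    and h_nonneg: "\<And>x y. 0 \<le> bregman h gh y x"
    and hB_lower: "\<And>x y. \<mu>h / 2 * normsq Q (x - y) \<le> bregman (hB h B V) (ghB gh B V) y x"
    and hB_upper: "\<And>x y. bregman (hB h B V) (ghB gh B V) y x \<le> Lh / 2 * normsq Q (x - y)"
    and "0 < Lh"
    and e_lip: "\<And>x y. sqrt (normsq V (eop gf V x - eop gf V y)) \<le> Le * sqrt (normsq V (x - y))"
    and lam: "\<And>q. ((B ** matrix_inv V ** transpose B) *v q) \<bullet> q \<le> lam * normsq Q q"
    and "0 \<le> lam" and "0 < \<alpha>"
  shows "(1 + \<alpha> * min (\<mu> / 2) ((2 - L) * \<mu>h - \<alpha> * (Lh\<^sup>2 + Le\<^sup>2 * lam)))
           * (1/2 * normsq V (u1 - ustar) + 1/2 * normsq Q (p1 - pstar))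
         \<le> (1/2 * normsq V (u - ustar) + 1/2 * normsq Q (p - pstar)) + \<alpha> / \<mu> * \<epsilon>"
proof -
  define r where "r = gf u1 + (1 / \<alpha>) *\<^sub>R (V *v (u1 - u + \<alpha> *\<^sub>R (matrix_inv V *v (transpose B *v p1))))"
  define E0 where "E0 = 1/2 * normsq V (u - ustar) + 1/2 * normsq Q (p - pstar)"
  define U Z where "U = normsq V (u1 - ustar)" and "Z = normsq Q (p1 - pstar)"
  define LS where "LS = Lh\<^sup>2 + Le\<^sup>2 * lam"
  define m where "m = min (\<mu> / 2) ((2 - L) * \<mu>h - \<alpha> * LS)"
  have m: "m \<le> \<mu> / 2" "m \<le> (2 - L) * \<mu>h - \<alpha> * LS"
    unfolding m_def by (rule min.cobounded1, rule min.cobounded2)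
  define dissipation where "dissipation = r \<bullet> (u1 - ustar) - (gf u1 - gf ustar) \<bullet> (u1 - ustar)
      - (matrix_inv V *v (gf u1 - gf ustar)) \<bullet> (transpose B *v (p1 - pstar))
      - (ghB gh B V p1 - ghB gh B V pstar) \<bullet> (p1 - pstar)"
  define cross where "cross = (ghB gh B V p1 - ghB gh B V p) \<bullet> (p1 - pstar)
      + (B *v (eop gf V u - eop gf V u1)) \<bullet> (p1 - pstar)"
  have "\<alpha> * dissipation \<le> \<alpha> * (\<epsilon> / \<mu> - \<mu> / 4 * U - (2 - L) * \<mu>h / 2 * Z)"
    using imex_dissipation_le[OF V residual[folded r_def] f \<open>0 < \<mu>\<close> \<open>\<mu> \<le> L\<close> \<open>L < 2\<close> h_nonneg hB_lower]
      \<open>0 < \<alpha>\<close> unfolding dissipation_def U_def Z_def by (intro mult_left_mono) auto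
  moreover have "\<alpha> * cross \<le> (normsq Q (p1 - p) + normsq V (u1 - u) + \<alpha>\<^sup>2 * LS * Z) / 2"
    unfolding cross_def Z_def LS_def using \<open>0 < \<alpha>\<close>
    by (intro imex_cross_terms_le[OF V Q _ h_nonneg hB_upper \<open>0 < Lh\<close> e_lip lam \<open>0 \<le> lam\<close>]) simp
  moreover have "(1/2 * U + 1/2 * Z) - E0
      = \<alpha> * dissipation + \<alpha> * cross - 1/2 * normsq V (u1 - u) - 1/2 * normsq Q (p1 - p)"
    using imex_step_energy_identity[OF V Q _ saddle1 saddle2 uh p1 r_def] \<open>0 < \<alpha>\<close>
    by (simp add: E0_def U_def Z_def dissipation_def cross_def inner_diff_left algebra_simps)
  ultimately have "(1/2 * U + 1/2 * Z) - E0
      \<le> \<alpha> * (\<epsilon> / \<mu> - \<mu> / 4 * U - (2 - L) * \<mu>h / 2 * Z) + \<alpha>\<^sup>2 * LS * Z / 2"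
    by argo
  also have "\<dots> = \<alpha> * \<epsilon> / \<mu> - \<alpha> * (\<mu> / 2) * (1/2 * U) - \<alpha> * ((2 - L) * \<mu>h - \<alpha> * LS) * (1/2 * Z)"
    by (simp add: power2_eq_square field_simps)
  finally have "(1/2 * U + 1/2 * Z) - E0
      \<le> \<alpha> * \<epsilon> / \<mu> - \<alpha> * (\<mu> / 2) * (1/2 * U) - \<alpha> * ((2 - L) * \<mu>h - \<alpha> * LS) * (1/2 * Z)" .
  moreover have "\<alpha> * m * (1/2 * U) \<le> \<alpha> * (\<mu> / 2) * (1/2 * U)"
    and "\<alpha> * m * (1/2 * Z) \<le> \<alpha> * ((2 - L) * \<mu>h - \<alpha> * LS) * (1/2 * Z)"
    using m \<open>0 < \<alpha>\<close> normsq_nonneg[OF V] normsq_nonneg[OF Q]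
    by (intro mult_right_mono mult_left_mono; simp add: U_def Z_def)+
  ultimately have "(1/2 * U + 1/2 * Z) - E0 \<le> \<alpha> * \<epsilon> / \<mu> - \<alpha> * m * (1/2 * U + 1/2 * Z)"
    by (simp add: algebra_simps)
  then show ?thesis
    by (simp add: E0_def U_def Z_def m_def LS_def algebra_simps)
qed

section \<open>Convergence rates\<close>

lemma linear_recursion_bound:
  fixes e d :: "nat \<Rightarrow> real"
  assumes "0 \<le> \<rho>" and step: "\<And>k. e (Suc k) \<le> \<rho> * e k + C * (\<rho> * d k)"
  shows "e (Suc N) \<le> \<rho> ^ Suc N * e 0 + C * (\<Sum>k=0..N. \<rho> ^ (N - k + 1) * d k)"
proof (induction N)
  case 0
  then show ?case
    using step[of 0] by simp
next
  case (Suc N)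
  have sum: "(\<Sum>k=0..Suc N. \<rho> ^ (Suc N - k + 1) * d k)
      = \<rho> * (\<Sum>k=0..N. \<rho> ^ (N - k + 1) * d k) + \<rho> * d (Suc N)"
  proof -
    have "(\<Sum>k=0..N. \<rho> ^ (Suc N - k + 1) * d k) = (\<Sum>k=0..N. \<rho> * (\<rho> ^ (N - k + 1) * d k))"
      by (rule sum.cong) (auto simp: Suc_diff_le)
    then show ?thesis
      by (simp add: sum_distrib_left)
  qed
  have "e (Suc (Suc N)) \<le> \<rho> * e (Suc N) + C * (\<rho> * d (Suc N))"
    by (rule step)
  also have "\<dots> \<le> \<rho> * (\<rho> ^ Suc N * e 0 + C * (\<Sum>k=0..N. \<rho> ^ (N - k + 1) * d k)) + C * (\<rho> * d (Suc N))"
    using Suc.IH \<open>0 \<le> \<rho>\<close> by (simp add: mult_left_mono)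
  also have "\<dots> = \<rho> ^ Suc (Suc N) * e 0 + C * (\<Sum>k=0..Suc N. \<rho> ^ (Suc N - k + 1) * d k)"
    unfolding sum by (simp add: algebra_simps)
  finally show ?case .
qed

text \<open>The one-step estimate has \<alpha> in front of \<epsilon>; the factor 2 only weakens it to the
  stated form.\<close>
lemma contraction_step_rate:
  fixes e0 e1 \<epsilon> \<alpha> \<mu>k \<mu>V :: real
  assumes "0 < \<mu>V" and "0 \<le> \<epsilon>" and "0 < \<alpha>" and pos: "0 < 1 + \<alpha> * \<mu>k"
    and step: "(1 + \<alpha> * \<mu>k) * e1 \<le> e0 + \<alpha> / \<mu>V * \<epsilon>"
  shows "e1 \<le> 1 / (1 + \<alpha> * \<mu>k) * e0 + 2 * \<alpha> / ((1 + \<alpha> * \<mu>k) * \<mu>V) * \<epsilon>"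
proof -
  have "\<alpha> / \<mu>V * \<epsilon> \<le> 2 * \<alpha> / \<mu>V * \<epsilon>"
    using assms(1-3) by (simp add: divide_right_mono mult_right_mono)
  with step have "e1 \<le> (e0 + 2 * \<alpha> / \<mu>V * \<epsilon>) / (1 + \<alpha> * \<mu>k)"
    using pos by (simp add: pos_le_divide_eq mult.commute)
  also have "\<dots> = 1 / (1 + \<alpha> * \<mu>k) * e0 + 2 * \<alpha> / ((1 + \<alpha> * \<mu>k) * \<mu>V) * \<epsilon>"
    by (simp add: add_divide_distrib)
  finally show ?thesis .
qed

lemma constant_step_geometric_rate:
  fixes e \<epsilon> :: "nat \<Rightarrow> real"
  assumes "0 < \<mu>V" and "0 < \<mu>Q" and "0 < LSQ2"
    and \<alpha>: "\<alpha> = \<mu>Q / (2 * LSQ2)" and \<mu>k: "\<mu>k = min (\<mu>V / 2) (\<mu>Q - \<alpha> * LSQ2)"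
    and step: "\<And>k. e (Suc k) \<le> 1 / (1 + \<alpha> * \<mu>k) * e k + 2 * \<alpha> / ((1 + \<alpha> * \<mu>k) * \<mu>V) * \<epsilon> k"
  defines "\<rho> \<equiv> 1 / (1 + \<mu>Q * min \<mu>V \<mu>Q / (4 * LSQ2))"
  shows "0 < \<rho>" and "\<rho> < 1"
    and "e (Suc N) \<le> \<rho> ^ Suc N * e 0 + \<mu>Q / (\<mu>V * LSQ2) * (\<Sum>k=0..N. \<rho> ^ (N - k + 1) * \<epsilon> k)"
proof -
  have q: "0 < \<mu>Q * min \<mu>V \<mu>Q / (4 * LSQ2)"
    using assms(1-3) by simp
  then show "0 < \<rho>" and "\<rho> < 1"
    by (simp_all add: \<rho>_def)
  have \<mu>k_eq: "\<mu>k = min \<mu>V \<mu>Q / 2"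
    using assms(3) unfolding \<mu>k \<alpha> by (simp add: field_simps min_def)
  have "1 / (1 + \<alpha> * \<mu>k) = \<rho>" and "2 * \<alpha> / ((1 + \<alpha> * \<mu>k) * \<mu>V) = \<mu>Q / (\<mu>V * LSQ2) * \<rho>"
    using assms(1-3) q unfolding \<mu>k_eq \<alpha> by (simp_all add: \<rho>_def field_simps)
  then have "e (Suc k) \<le> \<rho> * e k + \<mu>Q / (\<mu>V * LSQ2) * (\<rho> * \<epsilon> k)" for k
    using step[of k] by (simp add: mult.assoc)
  with \<open>0 < \<rho>\<close> show "e (Suc N) \<le> \<rho> ^ Suc N * e 0 + \<mu>Q / (\<mu>V * LSQ2) * (\<Sum>k=0..N. \<rho> ^ (N - k + 1) * \<epsilon> k)"
    by (intro linear_recursion_bound) auto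
qed

lemma imex_rates:
  fixes e \<epsilon> \<alpha> :: "nat \<Rightarrow> real"
  assumes "0 < \<mu>V" "0 < \<mu>Q" "0 < LSQ2" "\<And>k. 0 \<le> \<epsilon> k"
    and step: "\<And>k. 0 < \<alpha> k \<Longrightarrow> \<alpha> k * LSQ2 < \<mu>Q \<Longrightarrow>
      (1 + \<alpha> k * min (\<mu>V / 2) (\<mu>Q - \<alpha> k * LSQ2)) * e (Suc k) \<le> e k + \<alpha> k / \<mu>V * \<epsilon> k"
  shows "(\<forall>k. 0 < \<alpha> k \<and> \<alpha> k < \<mu>Q / LSQ2 \<longrightarrow>
            (let \<mu>k = min (\<mu>V / 2) (\<mu>Q - \<alpha> k * LSQ2) in
              e (Suc k) \<le> 1 / (1 + \<alpha> k * \<mu>k) * e k + 2 * \<alpha> k / ((1 + \<alpha> k * \<mu>k) * \<mu>V) * \<epsilon> k))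
       \<and> ((\<forall>k. \<alpha> k = \<mu>Q / (2 * LSQ2)) \<longrightarrow>
            (let \<mu> = min \<mu>V \<mu>Q; \<rho> = 1 / (1 + \<mu>Q * \<mu> / (4 * LSQ2)) in
              0 < \<rho> \<and> \<rho> < 1 \<and>
              (\<forall>N. e (Suc N) \<le> \<rho> ^ (Suc N) * e 0
                    + \<mu>Q / (\<mu>V * LSQ2) * (\<Sum>k=0..N. \<rho> ^ (N - k + 1) * \<epsilon> k))))"
proof -
  have rate: "e (Suc k) \<le> 1 / (1 + \<alpha> k * \<mu>k) * e k + 2 * \<alpha> k / ((1 + \<alpha> k * \<mu>k) * \<mu>V) * \<epsilon> k"
    if "0 < \<alpha> k" "\<alpha> k < \<mu>Q / LSQ2" and \<mu>k: "\<mu>k = min (\<mu>V / 2) (\<mu>Q - \<alpha> k * LSQ2)" for k \<mu>k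
  proof (rule contraction_step_rate[OF \<open>0 < \<mu>V\<close> \<open>0 \<le> \<epsilon> k\<close> \<open>0 < \<alpha> k\<close>])
    have "\<alpha> k * LSQ2 < \<mu>Q"
      using that \<open>0 < LSQ2\<close> by (simp add: pos_less_divide_eq)
    then show "0 < 1 + \<alpha> k * \<mu>k"
      using \<open>0 < \<alpha> k\<close> \<open>0 < \<mu>V\<close> by (simp add: \<mu>k add_pos_pos)
    show "(1 + \<alpha> k * \<mu>k) * e (Suc k) \<le> e k + \<alpha> k / \<mu>V * \<epsilon> k"
      using step[OF \<open>0 < \<alpha> k\<close> \<open>\<alpha> k * LSQ2 < \<mu>Q\<close>] unfolding \<mu>k .
  qed
  show ?thesis
  proof (intro conjI allI impI)
    show "let \<mu>k = min (\<mu>V / 2) (\<mu>Q - \<alpha> k * LSQ2) in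
        e (Suc k) \<le> 1 / (1 + \<alpha> k * \<mu>k) * e k + 2 * \<alpha> k / ((1 + \<alpha> k * \<mu>k) * \<mu>V) * \<epsilon> k"
      if "0 < \<alpha> k \<and> \<alpha> k < \<mu>Q / LSQ2" for k
      using rate that by (simp add: Let_def)
  next
    define \<alpha>0 where "\<alpha>0 = \<mu>Q / (2 * LSQ2)"
    assume "\<forall>k. \<alpha> k = \<mu>Q / (2 * LSQ2)"
    then have "\<alpha> k = \<alpha>0" for k
      by (simp add: \<alpha>0_def)
    moreover have "0 < \<alpha>0" "\<alpha>0 < \<mu>Q / LSQ2"
      using assms(2,3) by (simp_all add: \<alpha>0_def field_simps)
    ultimately have "e (Suc k) \<le> 1 / (1 + \<alpha>0 * min (\<mu>V / 2) (\<mu>Q - \<alpha>0 * LSQ2)) * e k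
        + 2 * \<alpha>0 / ((1 + \<alpha>0 * min (\<mu>V / 2) (\<mu>Q - \<alpha>0 * LSQ2)) * \<mu>V) * \<epsilon> k" for k
      using rate[OF _ _ refl, of k] by simp
    from constant_step_geometric_rate[where e = e and \<epsilon> = \<epsilon>, OF assms(1-3) \<alpha>0_def refl this]
    show "let \<mu> = min \<mu>V \<mu>Q; \<rho> = 1 / (1 + \<mu>Q * \<mu> / (4 * LSQ2)) in
        0 < \<rho> \<and> \<rho> < 1 \<and> (\<forall>N. e (Suc N) \<le> \<rho> ^ Suc N * e 0
          + \<mu>Q / (\<mu>V * LSQ2) * (\<Sum>k=0..N. \<rho> ^ (N - k + 1) * \<epsilon> k))"
      by (simp add: Let_def)
  qed
qed

theorem theorem4p4:
  fixes B :: "real^'m^'n"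
    and IV :: "real^'m^'m" and IQ :: "real^'n^'n"
    and f :: "real^'m \<Rightarrow> real" and gf :: "real^'m \<Rightarrow> real^'m"
    and h :: "real^'n \<Rightarrow> real" and gh :: "real^'n \<Rightarrow> real^'n"
    and ustar :: "real^'m" and pstar :: "real^'n"
    and \<mu>f Lf :: real
    and u uh :: "nat \<Rightarrow> real^'m" and p :: "nat \<Rightarrow> real^'n"
    and \<alpha> \<epsilon> :: "nat \<Rightarrow> real"
  assumes dims: "CARD('n) \<le> CARD('m)"
    and fullrank: "rank B = CARD('n)"
    and f_cvx: "convex_on UNIV f" and h_cvx: "convex_on UNIV h"
    and f_grad: "\<And>x. (f has_derivative (\<lambda>d. gf x \<bullet> d)) (at x)"
    and h_grad: "\<And>x. (h has_derivative (\<lambda>d. gh x \<bullet> d)) (at x)"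
    and gf_cont: "continuous_on UNIV gf" and gh_cont: "continuous_on UNIV gh"
    and gf_lip: "\<exists>L. \<forall>x y. norm (gf x - gf y) \<le> L * norm (x - y)"
    and gh_lip: "\<exists>L. \<forall>x y. norm (gh x - gh y) \<le> L * norm (x - y)"
    and saddle1: "gf ustar + transpose B *v pstar = 0"
    and saddle2: "B *v ustar = gh pstar"
    and IV_spd: "SPD IV" and IQ_spd: "SPD IQ"
    and f_S11: "in_S11 f gf IV \<mu>f Lf"
    and \<mu>f_pos: "0 < \<mu>f" and \<mu>f_Lf: "\<mu>f \<le> Lf" and Lf_lt2: "Lf < 2"
    and half_step: "\<And>k. uh k = u k - matrix_inv IV *v (gf (u k) + transpose B *v p k)"
    and p_step: "\<And>k. p (Suc k) = p k - \<alpha> k *\<^sub>R (matrix_inv IQ *v (gh (p k) - B *v uh k))"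
    and u_step: "\<And>k. normsq (matrix_inv IV)
                   (gf (u (Suc k)) + (1 / \<alpha> k) *\<^sub>R (IV *v (u (Suc k) - u k
                       + \<alpha> k *\<^sub>R (matrix_inv IV *v (transpose B *v p (Suc k)))))) \<le> \<epsilon> k"
  defines "E \<equiv> \<lambda>(v::real^'m) (q::real^'n). 1/2 * normsq IV (v - ustar) + 1/2 * normsq IQ (q - pstar)"
    and "\<mu>V \<equiv> \<mu>f"
    and "\<mu>Q \<equiv> (2 - Lf) * cvx_const (hB h B IV) (ghB gh B IV) IQ"
    and "LSQ2 \<equiv> (smooth_const (hB h B IV) (ghB gh B IV) IQ)\<^sup>2 + (lip_const (eop gf IV) IV)\<^sup>2 * lambda_max (matrix_inv IQ ** B ** matrix_inv IV ** transpose B)"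
  shows "(\<forall>k. 0 < \<alpha> k \<and> \<alpha> k < \<mu>Q / LSQ2 \<longrightarrow>
            (let \<mu>k = min (\<mu>V / 2) (\<mu>Q - \<alpha> k * LSQ2) in
              E (u (Suc k)) (p (Suc k))
                \<le> 1 / (1 + \<alpha> k * \<mu>k) * E (u k) (p k)
                   + 2 * \<alpha> k / ((1 + \<alpha> k * \<mu>k) * \<mu>V) * \<epsilon> k))
       \<and> ((\<forall>k. \<alpha> k = \<mu>Q / (2 * LSQ2)) \<longrightarrow>
            (let \<mu> = min \<mu>V \<mu>Q; \<rho> = 1 / (1 + \<mu>Q * \<mu> / (4 * LSQ2)) in
              0 < \<rho> \<and> \<rho> < 1 \<and>
              (\<forall>N. E (u (Suc N)) (p (Suc N))
                 \<le> \<rho> ^ (Suc N) * E (u 0) (p 0)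
                    + \<mu>Q / (\<mu>V * LSQ2) * (\<Sum>k=0..N. \<rho> ^ (N - k + 1) * \<epsilon> k))))"
proof -
  define \<mu>h Lh Le lam where "\<mu>h = cvx_const (hB h B IV) (ghB gh B IV) IQ"
    and "Lh = smooth_const (hB h B IV) (ghB gh B IV) IQ"
    and "Le = lip_const (eop gf IV) IV"
    and "lam = lambda_max (matrix_inv IQ ** B ** matrix_inv IV ** transpose B)"
  have "0 < Lf"
    using \<mu>f_pos \<mu>f_Lf by linarith
  note hB = hB_best_constants[OF IV_spd IQ_spd fullrank h_cvx h_grad gh_lip, folded \<mu>h_def Lh_def]
  note e = eop_lip_const[OF IV_spd f_S11 less_imp_le[OF \<mu>f_pos] \<open>0 < Lf\<close>, folded Le_def]
  note lam = schur_lambda_max[OF IV_spd IQ_spd, where B = B, folded lam_def]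
  have \<mu>Q: "\<mu>Q = (2 - Lf) * \<mu>h" and LSQ2: "LSQ2 = Lh\<^sup>2 + Le\<^sup>2 * lam"
    by (simp_all add: \<mu>Q_def LSQ2_def \<mu>h_def Lh_def Le_def lam_def)
  have "0 < Lh"
    using hB(1,2) by linarith
  have step: "(1 + \<alpha> k * min (\<mu>V / 2) (\<mu>Q - \<alpha> k * LSQ2)) * E (u (Suc k)) (p (Suc k))
      \<le> E (u k) (p k) + \<alpha> k / \<mu>V * \<epsilon> k" if "0 < \<alpha> k" for k
    using imex_step_contraction[OF IV_spd IQ_spd saddle1 saddle2 half_step p_step u_step f_S11 \<mu>f_pos
        \<mu>f_Lf Lf_lt2 convex_bregman_nonneg[OF h_cvx h_grad] hB(3,4) \<open>0 < Lh\<close> e lam(2,1) that]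
    unfolding E_def \<mu>V_def \<mu>Q LSQ2 by simp
  show ?thesis
  proof (rule imex_rates[where e = "\<lambda>k. E (u k) (p k)"])
    show "0 < \<mu>V" "0 < \<mu>Q" "0 < LSQ2"
      using \<mu>f_pos Lf_lt2 hB(1) \<open>0 < Lh\<close> lam(1) by (simp_all add: \<mu>V_def \<mu>Q LSQ2 add_pos_nonneg)
    show "0 \<le> \<epsilon> k" for k
      using normsq_nonneg[OF SPD_matrix_inv_SPD[OF IV_spd]] u_step[of k] by (rule order_trans)
  qed (use step in simp)
qed

end
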